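(* Let $\mathcal H$ be a well-structured preconditioner set, $\alpha\in(0,1)$, $\eta>0$, $T\in\mathbb N$. Let $f:\mathbb R^d\to\mathbb R$ be differentiable, bounded below, with $L_{\|\cdot\|_{\mathcal H}}(f)<\infty$, and $\Delta_0=f(x_0)-\inf f$. Let $f_0,\dots,f_{T-1}$ be mutually independent random differentiable functions with $\mathbb E[\nabla f_t(x)]=\nabla f(x)$ for all $t,x$, and with adaptive gradient variance $\sigma_{\mathcal H}(\{f_t\}_{t=0}^{T-1})\le\sigma_{\mathcal H}$. Let $(x_t)$ be generated by normalized steepest descent with momentum under the norm $\|\cdot\|_{\mathcal H}$. Then $$\mathbb E\,\frac1T\sum_{t=0}^{T-1}\|\nabla f(x_t)\|_{\mathcal H,*}\le\frac{\Delta_0}{\eta T}+\frac{2\eta}{\alpha}L_{\|\cdot\|_{\mathcal H}}(f)+\frac{2\sigma_{\mathcal H}}{\alpha T}+2\sigma_{\mathcal H}\sqrt\alpha.$$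
   Context: $\mathcal S^d_+$ (resp. $\mathcal S^d_{++}$) denotes the set of real symmetric positive semidefinite (resp. positive definite) $d\times d$ matrices. A set $\mathcal H\subseteq\mathcal S_+^d$ is a well-structured preconditioner set if $\mathcal H=\mathcal S_+^d\cap\mathcal K$ for some set $\mathcal K$ of real $d\times d$ matrices that is closed under scalar multiplication, matrix addition and matrix multiplication and contains the identity $I_d$. For $H\in\mathcal S_+^d$, $\|x\|_H=\sqrt{x^\top Hx}$; $\|x\|_{\mathcal H}:=\sup_{H\in\mathcal H,\operatorname{Tr}(H)\le1}\|x\|_H$ and $\|y\|_{\mathcal H,*}:=\sup_{\|x\|_{\mathcal H}\le1}\langle x,y\rangle$. For a norm $\|\cdot\|$ with dual $\|\cdot\|_*$, $L_{\|\cdot\|}(f)$ is the smallest $L$ with $\|\nabla f(x)-\nabla f(y)\|_*\le L\|x-y\|$ for all $x,y$. Adaptive gradient variance: $\sigma_{\mathcal H}(\{f_t\})^2:=\inf_{H\in\mathcal H\cap\mathcal S^d_{++},\operatorname{Tr}(H)\le1}\sup_{t,x}\mathbb E\|\nabla f_t(x)-\mathbb E[\nabla f_t(x)]\|_{H^{-1}}^2$. Normalized steepest descent with momentum under a norm $\|\cdot\|$: given $x_0$, set $g_t=\nabla f_t(x_t)$, $m_0=g_0$, $m_t=(1-\alpha)m_{t-1}+\alpha g_t$ for $t\ge1$, $u_t\in\arg\max_{\|u\|\le1}\langle m_t,u\rangle$, $x_{t+1}=x_t-\eta u_t$. *)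

theory Defs
  imports "HOL-Probability.Probability"
begin

definition psd_mat :: "real^'n^'n \<Rightarrow> bool" where
  "psd_mat A \<longleftrightarrow> transpose A = A \<and> (\<forall>x. 0 \<le> x \<bullet> (A *v x))"

definition pd_mat :: "real^'n^'n \<Rightarrow> bool" where
  "pd_mat A \<longleftrightarrow> transpose A = A \<and> (\<forall>x. x \<noteq> 0 \<longrightarrow> 0 < x \<bullet> (A *v x))"

definition well_structured :: "(real^'n^'n) set \<Rightarrow> bool" where
  "well_structured Hs \<longleftrightarrow> (\<exists>K. Hs = {A. psd_mat A} \<inter> K
      \<and> (\<forall>c. \<forall>A\<in>K. c *\<^sub>R A \<in> K)
      \<and> (\<forall>A\<in>K. \<forall>B\<in>K. A + B \<in> K)
      \<and> (\<forall>A\<in>K. \<forall>B\<in>K. A ** B \<in> K)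
      \<and> mat 1 \<in> K)"

definition mnorm :: "real^'n^'n \<Rightarrow> real^'n \<Rightarrow> real" where
  "mnorm H x = sqrt (x \<bullet> (H *v x))"

definition normH :: "(real^'n^'n) set \<Rightarrow> real^'n \<Rightarrow> real" where
  "normH Hs x = Sup {mnorm H x | H. H \<in> Hs \<and> trace H \<le> 1}"

definition dualH :: "(real^'n^'n) set \<Rightarrow> real^'n \<Rightarrow> real" where
  "dualH Hs y = Sup {x \<bullet> y | x. normH Hs x \<le> 1}"

definition lip_set :: "(real^'n^'n) set \<Rightarrow> (real^'n \<Rightarrow> real^'n) \<Rightarrow> real set" where
  "lip_set Hs Df = {L. \<forall>x y. dualH Hs (Df x - Df y) \<le> L * normH Hs (x - y)}"

definition lip_const :: "(real^'n^'n) set \<Rightarrow> (real^'n \<Rightarrow> real^'n) \<Rightarrow> real" where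
  "lip_const Hs Df = Inf (lip_set Hs Df)"

text \<open>Squared adaptive gradient variance \<open>\<sigma>_\<H>({f_t}_{t<T})^2\<close>, where \<open>g t x \<omega>\<close> is the
  stochastic gradient \<open>\<nabla>f_t(x)\<close> at outcome \<omega>; the norm is \<open>\<parallel>.\<parallel>_{H^{-1}}\<close>.
  Valued in ennreal (the supremum may be infinite).\<close>
definition adaptive_var2 ::
  "'a measure \<Rightarrow> (real^'n^'n) set \<Rightarrow> nat \<Rightarrow> (nat \<Rightarrow> real^'n \<Rightarrow> 'a \<Rightarrow> real^'n) \<Rightarrow> ennreal" where
  "adaptive_var2 M Hs T g =
     (INF H \<in> {H. H \<in> Hs \<and> pd_mat H \<and> trace H \<le> 1}.
        SUP tx \<in> {..<T} \<times> UNIV.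
          \<integral>\<^sup>+ \<omega>. ennreal ((mnorm (matrix_inv H) (g (fst tx) (snd tx) \<omega> - (\<integral>\<omega>'. g (fst tx) (snd tx) \<omega>' \<partial>M)))\<^sup>2) \<partial>M)"

text \<open>Normalized steepest descent with momentum: returns \<open>(x_t, m_t)\<close>.
  \<open>g t x\<close> is the (realized) gradient \<open>\<nabla>f_t(x)\<close>, \<open>sel m\<close> a chosen element of
  \<open>argmax_{\<parallel>u\<parallel> \<le> 1} <m,u>\<close>.\<close>
primrec nsdm :: "real \<Rightarrow> real \<Rightarrow> (real^'n \<Rightarrow> real^'n) \<Rightarrow> (nat \<Rightarrow> real^'n \<Rightarrow> real^'n)
                  \<Rightarrow> real^'n \<Rightarrow> nat \<Rightarrow> (real^'n) \<times> (real^'n)" where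
  "nsdm \<alpha> \<eta> sel g x0 0 = (x0, g 0 x0)"
| "nsdm \<alpha> \<eta> sel g x0 (Suc t) =
     (let x = fst (nsdm \<alpha> \<eta> sel g x0 t); m = snd (nsdm \<alpha> \<eta> sel g x0 t);
          x' = x - \<eta> *\<^sub>R sel m
      in (x', (1 - \<alpha>) *\<^sub>R m + \<alpha> *\<^sub>R g (Suc t) x'))"

definition is_argmax_sel :: "(real^'n \<Rightarrow> real) \<Rightarrow> (real^'n \<Rightarrow> real^'n) \<Rightarrow> bool" where
  "is_argmax_sel nrm sel \<longleftrightarrow> (\<forall>m. nrm (sel m) \<le> 1 \<and> (\<forall>u. nrm u \<le> 1 \<longrightarrow> m \<bullet> u \<le> m \<bullet> sel m))"

end

theory Submission
  imports Defs
begin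

(* Write e_t = m_t - grad f(x_t) for the momentum error. Since u_t maximises <m_t, u> over the
   unit ball of the norm, the descent lemma gives
     eta ||grad f(x_t)||_* <= f(x_t) - f(x_(t+1)) + 2 eta ||e_t||_* + 2 L eta^2 / alpha,
   and telescoping bounds the average gradient norm by Delta_0/(eta T) + 2 eta L/alpha plus
   (2/T) sum_t ||e_t||_*. The error splits into a drift, at most L eta (1 - alpha)/alpha because
   consecutive iterates are eta apart, and the noise
     eps_t = (1 - alpha) eps_(t-1) + alpha (grad f_t(x_t) - grad f(x_t)).
   For every admissible H the dual norm is dominated by ||.||_(H^-1), and since f_t is
   independent of x_t and of eps_(t-1) the cross terms vanish in expectation, so
   E ||eps_t||_(H^-1)^2 <= sigma^2 ((1 - alpha)^(2t) + alpha). Jensen's inequality and a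
   geometric sum turn this into the last two terms of the bound. *)

section \<open>Positive semidefinite matrices\<close>

lemma quad_form_add:
  fixes H :: "real^'n::finite^'n"
  shows "(a + b) \<bullet> (H *v (a + b)) = a \<bullet> (H *v a) + b \<bullet> (H *v b) + a \<bullet> (H *v b) + b \<bullet> (H *v a)"
  by (simp add: matrix_vector_right_distrib inner_add_left inner_add_right)

lemma quad_form_diff:
  fixes H :: "real^'n::finite^'n"
  shows "(a - b) \<bullet> (H *v (a - b)) = a \<bullet> (H *v a) + b \<bullet> (H *v b) - a \<bullet> (H *v b) - b \<bullet> (H *v a)"
  by (simp add: vec.diff inner_diff_left inner_diff_right)

lemma quad_form_scaleR:
  fixes H :: "real^'n::finite^'n"
  shows "(c *\<^sub>R a) \<bullet> (H *v (c *\<^sub>R a)) = c\<^sup>2 * (a \<bullet> (H *v a))"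
  by (simp add: matrix_vector_mult_scaleR power2_eq_square)

lemma inner_axis_matrix_vector_axis: "axis i 1 \<bullet> ((H::real^'n::finite^'n) *v axis j 1) = H$i$j"
  unfolding inner_axis' by (simp add: matrix_vector_mult_def axis_def if_distrib cong: if_cong)

lemma mnorm_scaleR: "mnorm H (c *\<^sub>R x) = \<bar>c\<bar> * mnorm H x"
  unfolding mnorm_def quad_form_scaleR by (simp add: real_sqrt_mult)

lemma mnorm_uminus: "mnorm H (- x) = mnorm H x"
  using mnorm_scaleR[of H "-1" x] by simp

lemma psd_mat_quad_form_nonneg: "psd_mat H \<Longrightarrow> 0 \<le> x \<bullet> (H *v x)"
  by (simp add: psd_mat_def)

lemma psd_mat_inner_commute:
  assumes "psd_mat H"
  shows "x \<bullet> (H *v y) = y \<bullet> (H *v x)"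
proof -
  have "x \<bullet> (H *v y) = (transpose H *v x) \<bullet> y"
    by (simp add: dot_lmul_matrix[symmetric])
  also have "\<dots> = y \<bullet> (H *v x)"
    using assms by (simp add: psd_mat_def inner_commute)
  finally show ?thesis .
qed

lemma pd_imp_psd_mat: "pd_mat H \<Longrightarrow> psd_mat H"
  unfolding pd_mat_def psd_mat_def by (metis inner_zero_left order.refl less_imp_le)

lemma psd_mat_entry_bound:
  fixes H :: "real^'n::finite^'n"
  assumes H: "psd_mat H" and tr: "trace H \<le> 1"
  shows "\<bar>H$i$j\<bar> \<le> 1"
proof -
  have diag_nonneg: "0 \<le> H$k$k" for k
    using psd_mat_quad_form_nonneg[OF H, of "axis k 1"] by (simp add: inner_axis_matrix_vector_axis)
  have diag_le: "H$k$k \<le> 1" for k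
  proof -
    have "H$k$k \<le> (\<Sum>l\<in>UNIV. H$l$l)"
      by (rule member_le_sum) (auto intro: diag_nonneg)
    then show ?thesis using tr by (simp add: trace_def)
  qed
  have "H$j$i = H$i$j"
    using psd_mat_inner_commute[OF H, of "axis i 1" "axis j 1"] by (simp add: inner_axis_matrix_vector_axis)
  moreover have "0 \<le> (axis i 1 + axis j 1) \<bullet> (H *v (axis i 1 + axis j 1))"
    and "0 \<le> (axis i 1 - axis j 1) \<bullet> (H *v (axis i 1 - axis j 1))"
    by (simp_all add: psd_mat_quad_form_nonneg[OF H])
  ultimately show ?thesis
    using diag_le[of i] diag_le[of j]
    unfolding quad_form_add quad_form_diff inner_axis_matrix_vector_axis by linarith
qed

lemma mnorm_le_sum_abs:
  fixes H :: "real^'n::finite^'n"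
  assumes H: "psd_mat H" and tr: "trace H \<le> 1"
  shows "mnorm H x \<le> (\<Sum>i\<in>UNIV. \<bar>x$i\<bar>)"
proof -
  have row: "x$i * (\<Sum>j\<in>UNIV. H$i$j * x$j) \<le> \<bar>x$i\<bar> * (\<Sum>j\<in>UNIV. \<bar>x$j\<bar>)" for i
  proof -
    have "\<bar>\<Sum>j\<in>UNIV. H$i$j * x$j\<bar> \<le> (\<Sum>j\<in>UNIV. \<bar>H$i$j * x$j\<bar>)"
      by (rule sum_abs)
    also have "\<dots> \<le> (\<Sum>j\<in>UNIV. \<bar>x$j\<bar>)"
      by (rule sum_mono) (simp add: abs_mult mult_left_le_one_le psd_mat_entry_bound[OF H tr])
    finally have "\<bar>x$i * (\<Sum>j\<in>UNIV. H$i$j * x$j)\<bar> \<le> \<bar>x$i\<bar> * (\<Sum>j\<in>UNIV. \<bar>x$j\<bar>)"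
      by (simp add: abs_mult mult_left_mono)
    then show ?thesis
      by linarith
  qed
  have "x \<bullet> (H *v x) = (\<Sum>i\<in>UNIV. x$i * (\<Sum>j\<in>UNIV. H$i$j * x$j))"
    by (simp add: inner_vec_def matrix_vector_mult_def)
  also have "\<dots> \<le> (\<Sum>i\<in>UNIV. \<bar>x$i\<bar> * (\<Sum>j\<in>UNIV. \<bar>x$j\<bar>))"
    by (rule sum_mono) (rule row)
  also have "\<dots> = (\<Sum>i\<in>UNIV. \<bar>x$i\<bar>)\<^sup>2"
    by (simp add: sum_distrib_right[symmetric] power2_eq_square)
  finally have "sqrt (x \<bullet> (H *v x)) \<le> sqrt ((\<Sum>i\<in>UNIV. \<bar>x$i\<bar>)\<^sup>2)"
    by (rule real_sqrt_le_mono)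
  then show ?thesis
    by (simp add: mnorm_def sum_nonneg)
qed

lemma psd_mat_cauchy_schwarz:
  fixes H :: "real^'n::finite^'n"
  assumes H: "psd_mat H"
  shows "x \<bullet> (H *v z) \<le> mnorm H x * mnorm H z"
proof -
  define a b c where "a = x \<bullet> (H *v x)" and "b = z \<bullet> (H *v z)" and "c = x \<bullet> (H *v z)"
  have ab: "0 \<le> a" "0 \<le> b"
    unfolding a_def b_def by (simp_all add: psd_mat_quad_form_nonneg[OF H])
  have quadratic: "0 \<le> a * k\<^sup>2 - 2 * c * k + b" for k
  proof -
    have "0 \<le> (k *\<^sub>R x - z) \<bullet> (H *v (k *\<^sub>R x - z))"
      by (rule psd_mat_quad_form_nonneg[OF H])
    also have "\<dots> = a * k\<^sup>2 - 2 * c * k + b"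
      unfolding quad_form_diff quad_form_scaleR a_def b_def c_def
      using psd_mat_inner_commute[OF H, of z x]
      by (simp add: matrix_vector_mult_scaleR algebra_simps)
    finally show ?thesis .
  qed
  have "c\<^sup>2 \<le> a * b"
  proof (cases "a = 0")
    case True
    have "c = 0"
    proof (rule ccontr)
      assume "c \<noteq> 0"
      then show False
        using quadratic[of "(b + 1) / (2 * c)"] True by (simp add: field_simps)
    qed
    then show ?thesis using ab by simp
  next
    case False
    then have "0 < a" using ab by simp
    then show ?thesis
      using quadratic[of "c / a"] by (simp add: field_simps power2_eq_square)
  qed
  then have "\<bar>c\<bar> \<le> sqrt a * sqrt b"
    using ab by (metis real_sqrt_abs real_sqrt_le_mono real_sqrt_mult)
  then show ?thesis
    unfolding mnorm_def a_def b_def c_def by linarith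
qed

lemma pd_mat_matrix_inv_right:
  fixes H :: "real^'n::finite^'n"
  assumes "pd_mat H"
  shows "H ** matrix_inv H = mat 1"
proof -
  have "\<forall>x. H *v x = 0 \<longrightarrow> x = 0"
    using assms by (auto simp: pd_mat_def)
  then have "invertible H"
    by (simp add: matrix_left_invertible_ker invertible_left_inverse)
  then have "\<exists>A'. H ** A' = mat 1 \<and> A' ** H = mat 1"
    by (simp add: invertible_def)
  then have "H ** matrix_inv H = mat 1 \<and> matrix_inv H ** H = mat 1"
    unfolding matrix_inv_def by (rule someI_ex)
  then show ?thesis ..
qed

lemma
  fixes H :: "real^'n::finite^'n"
  assumes H: "pd_mat H"
  shows inner_le_mnorm_mult_mnorm_matrix_inv: "x \<bullet> y \<le> mnorm H x * mnorm (matrix_inv H) y"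
    and matrix_inv_quad_form_nonneg: "0 \<le> y \<bullet> (matrix_inv H *v y)"
proof -
  define z where "z = matrix_inv H *v y"
  have Hz: "H *v z = y"
    unfolding z_def matrix_vector_mul_assoc pd_mat_matrix_inv_right[OF H] by simp
  have "z \<bullet> (H *v z) = z \<bullet> y"
    by (simp only: Hz)
  then have zHz: "z \<bullet> (H *v z) = y \<bullet> (matrix_inv H *v y)"
    by (simp add: z_def inner_commute)
  show "0 \<le> y \<bullet> (matrix_inv H *v y)"
    using psd_mat_quad_form_nonneg[OF pd_imp_psd_mat[OF H], of z] zHz by simp
  show "x \<bullet> y \<le> mnorm H x * mnorm (matrix_inv H) y"
    using psd_mat_cauchy_schwarz[OF pd_imp_psd_mat[OF H], of x z] zHz Hz
    by (simp add: mnorm_def)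
qed

lemma scaled_id_matrix_vector_mult: "(c *\<^sub>R (mat 1 :: real^'n::finite^'n)) *v x = c *\<^sub>R x"
  by (simp add: matrix_scaleR_vector_ac[symmetric])

lemma transpose_scaled_id: "transpose (c *\<^sub>R (mat 1 :: real^'n::finite^'n)) = c *\<^sub>R mat 1"
  by (simp add: transpose_def mat_def vec_eq_iff)

lemma psd_mat_scaled_id: "0 \<le> c \<Longrightarrow> psd_mat (c *\<^sub>R (mat 1 :: real^'n::finite^'n))"
  and pd_mat_scaled_id: "0 < c \<Longrightarrow> pd_mat (c *\<^sub>R (mat 1 :: real^'n::finite^'n))"
  unfolding psd_mat_def pd_mat_def scaled_id_matrix_vector_mult transpose_scaled_id by simp_all

lemma trace_scaled_id: "trace (c *\<^sub>R (mat 1 :: real^'n::finite^'n)) = c * real CARD('n)"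
  by (simp add: trace_def mat_def)

lemma mnorm_scaled_id: "mnorm (c *\<^sub>R (mat 1 :: real^'n::finite^'n)) x = sqrt (c * (x \<bullet> x))"
  by (simp add: mnorm_def scaled_id_matrix_vector_mult)

section \<open>The preconditioner norm and its dual\<close>

text \<open>Of well-structuredness only two consequences are used: every \<open>H \<in> Hs\<close> is positive
  semidefinite, and \<open>Hs\<close> contains every nonnegative multiple of the identity.\<close>
locale preconditioner_set =
  fixes Hs :: "(real^'n::finite^'n) set"
  assumes well_structured: "well_structured Hs"
begin

lemma psd_mat_of_mem: "H \<in> Hs \<Longrightarrow> psd_mat H"
  using well_structured by (auto simp: well_structured_def)

lemma scaled_id_mem: "0 \<le> c \<Longrightarrow> c *\<^sub>R mat 1 \<in> Hs"
  using well_structured psd_mat_scaled_id[of c] by (auto simp: well_structured_def)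

lemma normH_bdd: "bdd_above {mnorm H x | H. H \<in> Hs \<and> trace H \<le> 1}"
  by (rule bdd_aboveI[where M = "\<Sum>i\<in>UNIV. \<bar>x$i\<bar>"]) (auto intro: mnorm_le_sum_abs psd_mat_of_mem)

lemma normH_nonempty: "{mnorm H x | H. H \<in> Hs \<and> trace H \<le> 1} \<noteq> {}"
  using scaled_id_mem[of 0] by (force simp: trace_def)

lemma mnorm_le_normH: "H \<in> Hs \<Longrightarrow> trace H \<le> 1 \<Longrightarrow> mnorm H x \<le> normH Hs x"
  unfolding normH_def by (rule cSup_upper[OF _ normH_bdd]) blast

lemma normH_scaleR_le: "normH Hs (c *\<^sub>R x) \<le> \<bar>c\<bar> * normH Hs x"
  unfolding normH_def[of Hs "c *\<^sub>R x"]
  by (rule cSup_least[OF normH_nonempty])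
     (auto simp: mnorm_scaleR intro: mult_left_mono mnorm_le_normH)

lemma normH_uminus: "normH Hs (- x) = normH Hs x"
  by (simp add: normH_def mnorm_uminus)

lemma normH_nonneg: "0 \<le> normH Hs x"
  using mnorm_le_normH[of 0 x] scaled_id_mem[of 0] by (simp add: mnorm_def trace_def)

lemma normH_zero [simp]: "normH Hs 0 = 0"
  using normH_scaleR_le[of 0 0] normH_nonneg[of 0] by simp

lemma normH_pos: "x \<noteq> 0 \<Longrightarrow> 0 < normH Hs x"
proof -
  let ?c = "1 / real CARD('n)"
  assume "x \<noteq> 0"
  then have "0 < mnorm (?c *\<^sub>R mat 1) x"
    by (simp add: mnorm_scaled_id)
  also have "\<dots> \<le> normH Hs x"
    by (rule mnorm_le_normH) (simp_all add: scaled_id_mem trace_scaled_id)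
  finally show ?thesis .
qed

lemma inner_le_mnorm_matrix_inv:
  assumes H: "H \<in> Hs" "pd_mat H" "trace H \<le> 1" and x: "normH Hs x \<le> 1"
  shows "x \<bullet> y \<le> mnorm (matrix_inv H) y"
proof -
  have "x \<bullet> y \<le> mnorm H x * mnorm (matrix_inv H) y"
    by (rule inner_le_mnorm_mult_mnorm_matrix_inv[OF H(2)])
  also have "\<dots> \<le> mnorm (matrix_inv H) y"
  proof (rule mult_left_le_one_le)
    show "0 \<le> mnorm (matrix_inv H) y"
      by (simp add: mnorm_def matrix_inv_quad_form_nonneg[OF H(2)])
    show "0 \<le> mnorm H x"
      by (simp add: mnorm_def psd_mat_quad_form_nonneg[OF psd_mat_of_mem[OF H(1)]])
    show "mnorm H x \<le> 1"
      using mnorm_le_normH[OF H(1,3), of x] x by linarith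
  qed
  finally show ?thesis .
qed

lemma dualH_bdd: "bdd_above {x \<bullet> y | x. normH Hs x \<le> 1}"
proof -
  let ?H = "(1 / real CARD('n)) *\<^sub>R (mat 1 :: real^'n^'n)"
  have "?H \<in> Hs" "pd_mat ?H" "trace ?H \<le> 1"
    by (simp_all add: scaled_id_mem pd_mat_scaled_id trace_scaled_id)
  then show ?thesis
    by (intro bdd_aboveI[where M = "mnorm (matrix_inv ?H) y"]) (auto intro: inner_le_mnorm_matrix_inv)
qed

lemma dualH_nonempty: "{x \<bullet> y | x. normH Hs x \<le> 1} \<noteq> {}"
proof -
  have "0 \<bullet> y \<in> {x \<bullet> y | x. normH Hs x \<le> 1}"
    using normH_zero by (intro CollectI exI[of _ 0]) simp
  then show ?thesis by blast
qed

lemma inner_le_dualH: "normH Hs x \<le> 1 \<Longrightarrow> x \<bullet> y \<le> dualH Hs y"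
  unfolding dualH_def by (rule cSup_upper[OF _ dualH_bdd]) blast

lemma dualH_le_iff: "dualH Hs y \<le> c \<longleftrightarrow> (\<forall>x. normH Hs x \<le> 1 \<longrightarrow> x \<bullet> y \<le> c)"
  unfolding dualH_def by (subst cSup_le_iff[OF dualH_nonempty dualH_bdd]) blast

lemma dualH_le_mnorm_matrix_inv:
  "H \<in> Hs \<Longrightarrow> pd_mat H \<Longrightarrow> trace H \<le> 1 \<Longrightarrow> dualH Hs y \<le> mnorm (matrix_inv H) y"
  by (auto simp: dualH_le_iff intro: inner_le_mnorm_matrix_inv)

lemma dualH_triangle: "dualH Hs (a + b) \<le> dualH Hs a + dualH Hs b"
  by (auto simp: dualH_le_iff inner_add_right intro: add_mono inner_le_dualH)

lemma dualH_scaleR_le: "0 \<le> c \<Longrightarrow> dualH Hs (c *\<^sub>R a) \<le> c * dualH Hs a"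
  by (auto simp: dualH_le_iff intro: mult_left_mono inner_le_dualH)

lemma dualH_nonneg: "0 \<le> dualH Hs a"
  using inner_le_dualH[of 0 a] by simp

lemma dualH_uminus: "dualH Hs (- a) = dualH Hs a"
proof -
  have "dualH Hs (- a) \<le> dualH Hs a" for a
  proof (unfold dualH_le_iff, intro allI impI)
    fix x assume "normH Hs x \<le> 1"
    then have "(- x) \<bullet> a \<le> dualH Hs a"
      by (intro inner_le_dualH) (simp add: normH_uminus)
    then show "x \<bullet> - a \<le> dualH Hs a"
      by simp
  qed
  from this[of a] this[of "- a"] show ?thesis by simp
qed

lemma dualH_zero [simp]: "dualH Hs 0 = 0"
  using dualH_scaleR_le[of 0 0] dualH_nonneg[of 0] by simp

lemma lip_set_nonneg:
  assumes "L \<in> lip_set Hs Df"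
  shows "0 \<le> L"
proof -
  obtain e :: "real^'n" where "e \<noteq> 0"
    using axis_eq_0_iff[of _ "1::real"] by blast
  have "0 \<le> dualH Hs (Df e - Df 0)"
    by (rule dualH_nonneg)
  also have "\<dots> \<le> L * normH Hs (e - 0)"
    using assms unfolding lip_set_def by blast
  finally show ?thesis
    using normH_pos[OF \<open>e \<noteq> 0\<close>] by (simp add: zero_le_mult_iff)
qed

lemma lip_const_mem_lip_set:
  assumes "lip_set Hs Df \<noteq> {}"
  shows "lip_const Hs Df \<in> lip_set Hs Df"
proof -
  have "dualH Hs (Df x - Df y) \<le> lip_const Hs Df * normH Hs (x - y)" for x y
  proof (cases "x = y")
    case True
    then show ?thesis
      by simp
  next
    case False
    then have pos: "0 < normH Hs (x - y)"
      by (simp add: normH_pos)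
    have "dualH Hs (Df x - Df y) / normH Hs (x - y) \<le> lip_const Hs Df"
      unfolding lip_const_def using pos
      by (intro cInf_greatest[OF assms]) (simp add: lip_set_def divide_le_eq)
    then show ?thesis
      using pos by (simp add: divide_le_eq)
  qed
  then show ?thesis
    by (simp add: lip_set_def)
qed

end

section \<open>Normalized steepest descent with momentum along one run\<close>

lemma gradient_mean_value:
  fixes f :: "'a::real_inner \<Rightarrow> real"
  assumes f_grad: "\<And>x. (f has_derivative (\<lambda>h. Df x \<bullet> h)) (at x)"
  shows "\<exists>\<theta>\<in>{0..1}. f (x + d) - f x = Df (x + \<theta> *\<^sub>R d) \<bullet> d"
proof -
  have "\<exists>\<theta>\<in>{0..1::real}. f (x + 1 *\<^sub>R d) - f (x + 0 *\<^sub>R d) = (1 - 0) * (Df (x + \<theta> *\<^sub>R d) \<bullet> d)"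
  proof (rule mvt_very_simple)
    fix s :: real
    have "((\<lambda>s. x + s *\<^sub>R d) has_derivative (\<lambda>h. h *\<^sub>R d)) (at s)"
      by (auto intro!: derivative_eq_intros)
    from diff_chain_at[OF this f_grad]
    have "((\<lambda>s. f (x + s *\<^sub>R d)) has_derivative (\<lambda>h. h * (Df (x + s *\<^sub>R d) \<bullet> d))) (at s)"
      by (simp add: o_def)
    then show "((\<lambda>s. f (x + s *\<^sub>R d)) has_derivative (\<lambda>h. h * (Df (x + s *\<^sub>R d) \<bullet> d))) (at s within {0..1})"
      by (rule has_derivative_at_withinI)
  qed simp
  then show ?thesis by simp
qed

context preconditioner_set
begin

lemma descent_step:
  fixes f :: "real^'n \<Rightarrow> real"
  assumes f_grad: "\<And>x. (f has_derivative (\<lambda>h. Df x \<bullet> h)) (at x)"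
    and L: "L \<in> lip_set Hs Df" and u: "normH Hs u \<le> 1" and eta: "0 \<le> \<eta>"
  shows "f (x - \<eta> *\<^sub>R u) \<le> f x - \<eta> * (Df x \<bullet> u) + L * \<eta>\<^sup>2"
proof -
  from gradient_mean_value[OF f_grad, of x "- (\<eta> *\<^sub>R u)"]
  obtain \<theta> where \<theta>: "0 \<le> \<theta>" "\<theta> \<le> 1"
    and mvt: "f (x + - (\<eta> *\<^sub>R u)) - f x = Df (x + \<theta> *\<^sub>R - (\<eta> *\<^sub>R u)) \<bullet> - (\<eta> *\<^sub>R u)"
    by auto
  define z where "z = x - (\<theta> * \<eta>) *\<^sub>R u"
  have "normH Hs (x - z) \<le> \<bar>\<theta> * \<eta>\<bar> * normH Hs u"
    using normH_scaleR_le by (simp add: z_def)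
  also have "\<dots> \<le> \<theta> * \<eta>"
    using \<theta> eta u by (simp add: mult_left_le)
  also have "\<dots> \<le> \<eta>"
    using \<theta> eta by (simp add: mult_left_le_one_le)
  finally have "L * normH Hs (x - z) \<le> L * \<eta>"
    using lip_set_nonneg[OF L] by (rule mult_left_mono)
  moreover have "(Df x - Df z) \<bullet> u \<le> dualH Hs (Df x - Df z)"
    by (metis inner_commute inner_le_dualH[OF u])
  moreover have "dualH Hs (Df x - Df z) \<le> L * normH Hs (x - z)"
    using L by (simp add: lip_set_def)
  ultimately have "\<eta> * ((Df x - Df z) \<bullet> u) \<le> \<eta> * (L * \<eta>)"
    using eta by (intro mult_left_mono) auto
  also have "\<dots> = L * \<eta>\<^sup>2"
    by (simp add: power2_eq_square)
  finally have "\<eta> * ((Df x - Df z) \<bullet> u) \<le> L * \<eta>\<^sup>2" .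
  moreover have "f (x - \<eta> *\<^sub>R u) - f x = - \<eta> * (Df x \<bullet> u) + \<eta> * ((Df x - Df z) \<bullet> u)"
    using mvt by (simp add: z_def algebra_simps inner_diff_left)
  ultimately show ?thesis
    by linarith
qed

end

text \<open>The part of the momentum error \<open>m\<^sub>t - \<nabla>f(x\<^sub>t)\<close> due to the gradient noise: the errors
  \<open>g\<^sub>s(x\<^sub>s) - \<nabla>f(x\<^sub>s)\<close> averaged with the momentum weights.\<close>
primrec momentum_noise :: "real \<Rightarrow> real \<Rightarrow> (real^'n \<Rightarrow> real^'n) \<Rightarrow> (real^'n \<Rightarrow> real^'n)
    \<Rightarrow> (nat \<Rightarrow> real^'n \<Rightarrow> real^'n) \<Rightarrow> real^'n \<Rightarrow> nat \<Rightarrow> real^'n" where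
  "momentum_noise \<alpha> \<eta> sel Df g x0 0 = g 0 x0 - Df x0"
| "momentum_noise \<alpha> \<eta> sel Df g x0 (Suc t) = (1 - \<alpha>) *\<^sub>R momentum_noise \<alpha> \<eta> sel Df g x0 t
     + \<alpha> *\<^sub>R (g (Suc t) (fst (nsdm \<alpha> \<eta> sel g x0 (Suc t))) - Df (fst (nsdm \<alpha> \<eta> sel g x0 (Suc t))))"

lemma fst_nsdm_Suc:
  "fst (nsdm \<alpha> \<eta> sel g x0 (Suc t)) = fst (nsdm \<alpha> \<eta> sel g x0 t) - \<eta> *\<^sub>R sel (snd (nsdm \<alpha> \<eta> sel g x0 t))"
  by (simp add: Let_def)

lemma snd_nsdm_Suc:
  "snd (nsdm \<alpha> \<eta> sel g x0 (Suc t)) =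
     (1 - \<alpha>) *\<^sub>R snd (nsdm \<alpha> \<eta> sel g x0 t) + \<alpha> *\<^sub>R g (Suc t) (fst (nsdm \<alpha> \<eta> sel g x0 (Suc t)))"
  by (simp add: Let_def)

lemma nsdm_cong:
  "(\<And>s. s \<le> t \<Longrightarrow> g s = g' s) \<Longrightarrow> nsdm \<alpha> \<eta> sel g x0 t = nsdm \<alpha> \<eta> sel g' x0 t"
  by (induction t) (simp_all add: Let_def)

lemma momentum_noise_cong:
  "(\<And>s. s \<le> t \<Longrightarrow> g s = g' s) \<Longrightarrow> momentum_noise \<alpha> \<eta> sel Df g x0 t = momentum_noise \<alpha> \<eta> sel Df g' x0 t"
proof (induction t)
  case (Suc t)
  then show ?case
    using nsdm_cong[of "Suc t" g g'] by simp
qed simp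

locale nsdm_path = preconditioner_set Hs
  for Hs :: "(real^'n::finite^'n) set" +
  fixes \<alpha> \<eta> L :: real and Df sel :: "real^'n \<Rightarrow> real^'n"
    and g :: "nat \<Rightarrow> real^'n \<Rightarrow> real^'n" and x0 :: "real^'n"
  assumes alpha: "0 < \<alpha>" "\<alpha> < 1" and eta: "0 < \<eta>"
    and lipschitz: "L \<in> lip_set Hs Df"
    and argmax_sel: "is_argmax_sel (normH Hs) sel"
begin

abbreviation iterate :: "nat \<Rightarrow> real^'n" where
  "iterate t \<equiv> fst (nsdm \<alpha> \<eta> sel g x0 t)"

abbreviation momentum :: "nat \<Rightarrow> real^'n" where
  "momentum t \<equiv> snd (nsdm \<alpha> \<eta> sel g x0 t)"

abbreviation noise :: "nat \<Rightarrow> real^'n" where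
  "noise t \<equiv> momentum_noise \<alpha> \<eta> sel Df g x0 t"

lemma normH_sel_le: "normH Hs (sel m) \<le> 1"
  using argmax_sel by (simp add: is_argmax_sel_def)

lemma dualH_le_inner_sel: "dualH Hs m \<le> m \<bullet> sel m"
  unfolding dualH_le_iff using argmax_sel by (metis is_argmax_sel_def inner_commute)

lemma dualH_le_inner_sel_add: "dualH Hs v \<le> v \<bullet> sel m + 2 * dualH Hs (m - v)"
proof -
  have "dualH Hs v = dualH Hs (m + - (m - v))"
    by simp
  also have "\<dots> \<le> dualH Hs m + dualH Hs (m - v)"
    by (metis dualH_triangle dualH_uminus)
  also have "dualH Hs m \<le> v \<bullet> sel m + (m - v) \<bullet> sel m"
    using dualH_le_inner_sel[of m] by (simp add: inner_diff_left)
  also have "(m - v) \<bullet> sel m \<le> dualH Hs (m - v)"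
    by (metis inner_commute inner_le_dualH[OF normH_sel_le])
  finally show ?thesis
    by simp
qed

lemma dualH_grad_step_le: "dualH Hs (Df (iterate t) - Df (iterate (Suc t))) \<le> L * \<eta>"
proof -
  have "normH Hs (iterate t - iterate (Suc t)) \<le> \<bar>\<eta>\<bar> * normH Hs (sel (momentum t))"
    using normH_scaleR_le unfolding fst_nsdm_Suc by simp
  also have "\<dots> \<le> \<eta>"
    using normH_sel_le eta by (simp add: mult_left_le)
  finally have "L * normH Hs (iterate t - iterate (Suc t)) \<le> L * \<eta>"
    using lip_set_nonneg[OF lipschitz] by (rule mult_left_mono)
  then show ?thesis
    using lipschitz unfolding lip_set_def by (blast intro: order_trans)
qed

lemma dualH_momentum_drift_le:
  "dualH Hs (momentum t - Df (iterate t) - noise t) \<le> L * \<eta> * (1 - \<alpha>) / \<alpha>"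
proof (induction t)
  case 0
  show ?case
    using alpha eta lip_set_nonneg[OF lipschitz] by simp
next
  case (Suc t)
  have regroup: "(1 - \<alpha>) *\<^sub>R m + \<alpha> *\<^sub>R G - D' - ((1 - \<alpha>) *\<^sub>R N + \<alpha> *\<^sub>R (G - D'))
      = (1 - \<alpha>) *\<^sub>R (m - D - N) + (1 - \<alpha>) *\<^sub>R (D - D')" for m G D D' N :: "real^'n"
    by (simp add: algebra_simps)
  have error_Suc: "momentum (Suc t) - Df (iterate (Suc t)) - noise (Suc t) =
      (1 - \<alpha>) *\<^sub>R (momentum t - Df (iterate t) - noise t)
      + (1 - \<alpha>) *\<^sub>R (Df (iterate t) - Df (iterate (Suc t)))"
    unfolding snd_nsdm_Suc momentum_noise.simps(2) by (rule regroup)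
  have "dualH Hs (momentum (Suc t) - Df (iterate (Suc t)) - noise (Suc t))
      \<le> dualH Hs ((1 - \<alpha>) *\<^sub>R (momentum t - Df (iterate t) - noise t))
        + dualH Hs ((1 - \<alpha>) *\<^sub>R (Df (iterate t) - Df (iterate (Suc t))))"
    unfolding error_Suc by (rule dualH_triangle)
  also have "\<dots> \<le> (1 - \<alpha>) * dualH Hs (momentum t - Df (iterate t) - noise t)
        + (1 - \<alpha>) * dualH Hs (Df (iterate t) - Df (iterate (Suc t)))"
    using alpha by (intro add_mono dualH_scaleR_le) auto
  also have "\<dots> \<le> (1 - \<alpha>) * (L * \<eta> * (1 - \<alpha>) / \<alpha>) + (1 - \<alpha>) * (L * \<eta>)"
    using alpha Suc.IH dualH_grad_step_le[of t] by (intro add_mono mult_left_mono) auto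
  also have "\<dots> = L * \<eta> * (1 - \<alpha>) / \<alpha>"
    using alpha by (simp add: field_simps)
  finally show ?case .
qed

lemma nsdm_one_step:
  fixes f :: "real^'n \<Rightarrow> real"
  assumes f_grad: "\<And>x. (f has_derivative (\<lambda>h. Df x \<bullet> h)) (at x)"
  shows "\<eta> * dualH Hs (Df (iterate t))
    \<le> f (iterate t) - f (iterate (Suc t)) + 2 * \<eta> * dualH Hs (noise t) + 2 * L * \<eta>\<^sup>2 / \<alpha>"
proof -
  define u where "u = sel (momentum t)"
  define e where "e = momentum t - Df (iterate t)"
  have descent: "f (iterate (Suc t)) \<le> f (iterate t) - \<eta> * (Df (iterate t) \<bullet> u) + L * \<eta>\<^sup>2"
    unfolding fst_nsdm_Suc u_def using eta
    by (intro descent_step[OF f_grad lipschitz normH_sel_le]) simp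
  have grad: "dualH Hs (Df (iterate t)) \<le> Df (iterate t) \<bullet> u + 2 * dualH Hs e"
    unfolding u_def e_def by (rule dualH_le_inner_sel_add)
  define D where "D = L * \<eta> * (1 - \<alpha>) / \<alpha>"
  have "dualH Hs e \<le> D + dualH Hs (noise t)"
    using dualH_triangle[of "e - noise t" "noise t"] dualH_momentum_drift_le[of t]
    by (simp add: e_def D_def)
  with grad have "dualH Hs (Df (iterate t)) \<le> Df (iterate t) \<bullet> u + 2 * D + 2 * dualH Hs (noise t)"
    by linarith
  then have "\<eta> * dualH Hs (Df (iterate t)) \<le> \<eta> * (Df (iterate t) \<bullet> u + 2 * D + 2 * dualH Hs (noise t))"
    using eta by (intro mult_left_mono) auto
  also have "\<dots> = \<eta> * (Df (iterate t) \<bullet> u) + 2 * \<eta> * D + 2 * \<eta> * dualH Hs (noise t)"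
    by (simp add: algebra_simps)
  also have "2 * \<eta> * D \<le> 2 * L * \<eta>\<^sup>2 / \<alpha> - L * \<eta>\<^sup>2"
  proof -
    have "2 * \<eta> * D = 2 * L * \<eta>\<^sup>2 / \<alpha> - 2 * (L * \<eta>\<^sup>2)"
      using alpha by (simp add: D_def field_simps power2_eq_square)
    then show ?thesis
      using lip_set_nonneg[OF lipschitz] by simp
  qed
  finally show ?thesis
    using descent by linarith
qed

lemma average_dualH_grad_le:
  fixes f :: "real^'n \<Rightarrow> real"
  assumes f_grad: "\<And>x. (f has_derivative (\<lambda>h. Df x \<bullet> h)) (at x)"
    and f_bdd: "bdd_below (range f)" and T: "0 < T"
  shows "(1 / real T) * (\<Sum>t<T. dualH Hs (Df (iterate t)))
    \<le> (f x0 - Inf (range f)) / (\<eta> * real T) + 2 * \<eta> / \<alpha> * L + (2 / real T) * (\<Sum>t<T. dualH Hs (noise t))"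
proof -
  define S where "S = (\<Sum>t<T. dualH Hs (Df (iterate t)))"
  define N where "N = (\<Sum>t<T. dualH Hs (noise t))"
  have "\<eta> * S \<le> (\<Sum>t<T. f (iterate t) - f (iterate (Suc t)) + 2 * \<eta> * dualH Hs (noise t) + 2 * L * \<eta>\<^sup>2 / \<alpha>)"
    unfolding S_def sum_distrib_left by (intro sum_mono nsdm_one_step[OF f_grad])
  also have "\<dots> = (\<Sum>t<T. f (iterate t) - f (iterate (Suc t))) + 2 * \<eta> * N + real T * (2 * L * \<eta>\<^sup>2 / \<alpha>)"
    unfolding N_def sum.distrib sum_distrib_left by simp
  also have "(\<Sum>t<T. f (iterate t) - f (iterate (Suc t))) = f x0 - f (iterate T)"
    by (subst sum_lessThan_telescope') simp
  finally have "\<eta> * S \<le> f x0 - f (iterate T) + 2 * \<eta> * N + real T * (2 * L * \<eta>\<^sup>2 / \<alpha>)" .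
  moreover have "Inf (range f) \<le> f (iterate T)"
    using f_bdd by (simp add: cInf_lower)
  ultimately have "\<eta> * S \<le> f x0 - Inf (range f) + 2 * \<eta> * N + real T * (2 * L * \<eta>\<^sup>2 / \<alpha>)"
    by linarith
  then have "\<eta> * S / (\<eta> * real T) \<le> (f x0 - Inf (range f) + 2 * \<eta> * N + real T * (2 * L * \<eta>\<^sup>2 / \<alpha>)) / (\<eta> * real T)"
    using eta T by (intro divide_right_mono) auto
  also have "\<dots> = (f x0 - Inf (range f)) / (\<eta> * real T) + 2 * \<eta> / \<alpha> * L + (2 / real T) * N"
    using eta T alpha by (simp add: field_simps power2_eq_square)
  also have "\<eta> * S / (\<eta> * real T) = (1 / real T) * S"
    using eta by simp
  finally show ?thesis
    unfolding S_def N_def .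
qed


lemma average_dualH_grad_le_mnorm:
  fixes f :: "real^'n \<Rightarrow> real"
  assumes f_grad: "\<And>x. (f has_derivative (\<lambda>h. Df x \<bullet> h)) (at x)"
    and f_bdd: "bdd_below (range f)" and T: "0 < T"
    and H: "H \<in> Hs" "pd_mat H" "trace H \<le> 1"
  shows "(1 / real T) * (\<Sum>t<T. dualH Hs (Df (iterate t)))
    \<le> (f x0 - Inf (range f)) / (\<eta> * real T) + 2 * \<eta> / \<alpha> * L
      + (2 / real T) * (\<Sum>t<T. mnorm (matrix_inv H) (noise t))"
proof -
  have "(2 / real T) * (\<Sum>t<T. dualH Hs (noise t)) \<le> (2 / real T) * (\<Sum>t<T. mnorm (matrix_inv H) (noise t))"
    using H by (intro mult_left_mono sum_mono dualH_le_mnorm_matrix_inv) auto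
  with average_dualH_grad_le[OF f_grad f_bdd T] show ?thesis
    by linarith
qed

end

section \<open>Measurability and moments of quadratic forms\<close>

lemma borel_measurable_quad_form:
  fixes A :: "real^'n::finite^'n" and f :: "'a \<Rightarrow> real^'n"
  assumes "f \<in> borel_measurable M"
  shows "(\<lambda>w. f w \<bullet> (A *v f w)) \<in> borel_measurable M"
proof -
  have "continuous_on UNIV (\<lambda>v::real^'n. A *v v)"
    by (rule matrix_vector_mult_linear_continuous_on)
  then have "continuous_on UNIV (\<lambda>v::real^'n. v \<bullet> (A *v v))"
    by (intro continuous_intros)
  then show ?thesis
    using assms borel_measurable_continuous_on by blast
qed

lemma borel_measurable_mnorm:
  fixes f :: "'a \<Rightarrow> real^'n::finite"
  assumes "f \<in> borel_measurable M"
  shows "(\<lambda>w. mnorm A (f w)) \<in> borel_measurable M"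
  unfolding mnorm_def
  using measurable_compose[OF borel_measurable_quad_form[OF assms] borel_measurable_sqrt] by blast

context prob_space
begin

lemma nn_integral_le_of_second_moment:
  fixes Y :: "'a \<Rightarrow> real"
  assumes Y: "Y \<in> borel_measurable M" "\<And>w. 0 \<le> Y w"
    and c: "0 < c" and second_moment: "(\<integral>\<^sup>+ w. ennreal ((Y w)\<^sup>2) \<partial>M) \<le> ennreal (c\<^sup>2)"
  shows "(\<integral>\<^sup>+ w. ennreal (Y w) \<partial>M) \<le> ennreal c"
proof -
  have am_gm: "Y w \<le> (1 / (2 * c)) * (Y w)\<^sup>2 + c / 2" for w
  proof -
    have "2 * c * Y w \<le> (Y w)\<^sup>2 + c\<^sup>2"
      using sum_squares_bound[of c "Y w"] by (simp add: power2_eq_square algebra_simps)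
    then show ?thesis
      using c by (simp add: field_simps power2_eq_square)
  qed
  have "(\<integral>\<^sup>+ w. ennreal (Y w) \<partial>M) \<le> (\<integral>\<^sup>+ w. ennreal (1 / (2 * c)) * ennreal ((Y w)\<^sup>2) + ennreal (c / 2) \<partial>M)"
    using am_gm c
    by (intro nn_integral_mono) (simp add: ennreal_mult[symmetric] ennreal_plus[symmetric] del: ennreal_plus)
  also have "\<dots> = ennreal (1 / (2 * c)) * (\<integral>\<^sup>+ w. ennreal ((Y w)\<^sup>2) \<partial>M) + ennreal (c / 2)"
    using Y by (subst nn_integral_add) (auto simp: nn_integral_cmult emeasure_space_1)
  also have "\<dots> \<le> ennreal (1 / (2 * c)) * ennreal (c\<^sup>2) + ennreal (c / 2)"
    using second_moment by (intro add_mono mult_left_mono) auto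
  also have "\<dots> = ennreal c"
    using c by (simp add: ennreal_mult[symmetric] ennreal_plus[symmetric] power2_eq_square field_simps
        del: ennreal_plus)
  finally show ?thesis .
qed

lemma integral_quad_form_shift_centered:
  fixes \<delta> :: "'a \<Rightarrow> real^'n::finite" and A :: "real^'n^'n"
  assumes \<delta>: "integrable M \<delta>" "integral\<^sup>L M \<delta> = 0"
    and q: "integrable M (\<lambda>w. \<delta> w \<bullet> (A *v \<delta> w))"
  shows "integrable M (\<lambda>w. (c + a *\<^sub>R \<delta> w) \<bullet> (A *v (c + a *\<^sub>R \<delta> w)))"
    and "(\<integral>w. (c + a *\<^sub>R \<delta> w) \<bullet> (A *v (c + a *\<^sub>R \<delta> w)) \<partial>M)
      = c \<bullet> (A *v c) + a\<^sup>2 * (\<integral>w. \<delta> w \<bullet> (A *v \<delta> w) \<partial>M)"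
proof -
  \<comment> \<open>The cross terms are linear in \<open>\<delta>\<close> and integrate to zero.\<close>
  have expand: "(\<lambda>w. (c + a *\<^sub>R \<delta> w) \<bullet> (A *v (c + a *\<^sub>R \<delta> w)))
      = (\<lambda>w. c \<bullet> (A *v c) + a * ((c v* A) \<bullet> \<delta> w + \<delta> w \<bullet> (A *v c)) + a\<^sup>2 * (\<delta> w \<bullet> (A *v \<delta> w)))"
    unfolding quad_form_add
    by (simp add: fun_eq_iff matrix_vector_mult_scaleR dot_lmul_matrix power2_eq_square algebra_simps)
  have cross: "integrable M (\<lambda>w. (c v* A) \<bullet> \<delta> w)" "integrable M (\<lambda>w. \<delta> w \<bullet> (A *v c))"
    by (intro integrable_inner_right integrable_inner_left \<delta>(1))+
  show "integrable M (\<lambda>w. (c + a *\<^sub>R \<delta> w) \<bullet> (A *v (c + a *\<^sub>R \<delta> w)))"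
    unfolding expand using cross q
    by (intro Bochner_Integration.integrable_add integrable_mult_right integrable_const)
  show "(\<integral>w. (c + a *\<^sub>R \<delta> w) \<bullet> (A *v (c + a *\<^sub>R \<delta> w)) \<partial>M)
      = c \<bullet> (A *v c) + a\<^sup>2 * (\<integral>w. \<delta> w \<bullet> (A *v \<delta> w) \<partial>M)"
    unfolding expand using cross q \<delta>
    by (simp add: Bochner_Integration.integral_add integrable_mult_right
        Bochner_Integration.integrable_add prob_space)
qed

lemma nn_integral_quad_form_shift_centered:
  fixes \<delta> :: "'a \<Rightarrow> real^'n::finite" and A :: "real^'n^'n"
  assumes \<delta>: "integrable M \<delta>" "integral\<^sup>L M \<delta> = 0"
    and A: "\<And>v. 0 \<le> v \<bullet> (A *v v)"
    and V: "(\<integral>\<^sup>+ w. ennreal (\<delta> w \<bullet> (A *v \<delta> w)) \<partial>M) \<le> ennreal V" "0 \<le> V"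
  shows "(\<integral>\<^sup>+ w. ennreal ((c + a *\<^sub>R \<delta> w) \<bullet> (A *v (c + a *\<^sub>R \<delta> w))) \<partial>M)
    \<le> ennreal (c \<bullet> (A *v c) + a\<^sup>2 * V)"
proof -
  define q where "q w = \<delta> w \<bullet> (A *v \<delta> w)" for w
  have q_measurable: "q \<in> borel_measurable M"
    unfolding q_def by (intro borel_measurable_quad_form borel_measurable_integrable[OF \<delta>(1)])
  have q_nn_integral: "(\<integral>\<^sup>+ w. ennreal (q w) \<partial>M) \<le> ennreal V"
    using V(1) by (simp add: q_def)
  have q_integrable: "integrable M q"
  proof (rule integrableI_bounded[OF q_measurable])
    have "(\<integral>\<^sup>+ w. ennreal (norm (q w)) \<partial>M) = (\<integral>\<^sup>+ w. ennreal (q w) \<partial>M)"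
      using A by (intro nn_integral_cong) (simp add: q_def)
    then show "(\<integral>\<^sup>+ w. ennreal (norm (q w)) \<partial>M) < \<infinity>"
      using q_nn_integral by (simp add: order_le_less_trans)
  qed
  have "ennreal (integral\<^sup>L M q) = (\<integral>\<^sup>+ w. ennreal (q w) \<partial>M)"
    using q_integrable A by (subst nn_integral_eq_integral) (auto simp: q_def)
  then have "ennreal (integral\<^sup>L M q) \<le> ennreal V"
    using q_nn_integral by simp
  then have "integral\<^sup>L M q \<le> V"
    using ennreal_le_iff[OF V(2)] by blast
  note shift = integral_quad_form_shift_centered[OF \<delta> q_integrable[unfolded q_def], of c a]
  have "(\<integral>\<^sup>+ w. ennreal ((c + a *\<^sub>R \<delta> w) \<bullet> (A *v (c + a *\<^sub>R \<delta> w))) \<partial>M)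
      = ennreal (c \<bullet> (A *v c) + a\<^sup>2 * integral\<^sup>L M q)"
    using shift A by (subst nn_integral_eq_integral) (auto simp: q_def[abs_def])
  also have "\<dots> \<le> ennreal (c \<bullet> (A *v c) + a\<^sup>2 * V)"
    using \<open>integral\<^sup>L M q \<le> V\<close> by (intro ennreal_leI add_left_mono mult_left_mono) auto
  finally show ?thesis .
qed

lemma nn_integral_indep_var:
  assumes indep: "indep_var N1 X N2 Y" and f: "f \<in> borel_measurable (N1 \<Otimes>\<^sub>M N2)"
  shows "(\<integral>\<^sup>+ \<omega>. f (X \<omega>, Y \<omega>) \<partial>M) = (\<integral>\<^sup>+ \<omega>. \<integral>\<^sup>+ \<omega>'. f (X \<omega>, Y \<omega>') \<partial>M \<partial>M)"
proof -
  have X: "X \<in> measurable M N1" and Y: "Y \<in> measurable M N2"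
    and joint: "distr M N1 X \<Otimes>\<^sub>M distr M N2 Y = distr M (N1 \<Otimes>\<^sub>M N2) (\<lambda>\<omega>. (X \<omega>, Y \<omega>))"
    using indep by (simp_all add: indep_var_distribution_eq)
  interpret PX: prob_space "distr M N1 X" by (rule prob_space_distr[OF X])
  interpret PY: prob_space "distr M N2 Y" by (rule prob_space_distr[OF Y])
  have f': "f \<in> borel_measurable (distr M N1 X \<Otimes>\<^sub>M distr M N2 Y)"
    using f by (subst measurable_cong_sets[OF sets_pair_measure_cong[OF sets_distr sets_distr] refl])
  have "(\<integral>\<^sup>+ \<omega>. f (X \<omega>, Y \<omega>) \<partial>M) = (\<integral>\<^sup>+ p. f p \<partial>distr M (N1 \<Otimes>\<^sub>M N2) (\<lambda>\<omega>. (X \<omega>, Y \<omega>)))"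
    using X Y f by (subst nn_integral_distr) (auto intro: measurable_Pair)
  also have "\<dots> = (\<integral>\<^sup>+ x. \<integral>\<^sup>+ y. f (x, y) \<partial>distr M N2 Y \<partial>distr M N1 X)"
    unfolding joint[symmetric] by (rule PY.nn_integral_fst[OF f', symmetric])
  also have "\<dots> = (\<integral>\<^sup>+ \<omega>. \<integral>\<^sup>+ y. f (X \<omega>, y) \<partial>distr M N2 Y \<partial>M)"
    using PY.borel_measurable_nn_integral_fst[OF f'] X by (subst nn_integral_distr) auto
  also have "\<dots> = (\<integral>\<^sup>+ \<omega>. \<integral>\<^sup>+ \<omega>'. f (X \<omega>, Y \<omega>') \<partial>M \<partial>M)"
  proof (rule nn_integral_cong)
    fix \<omega> assume "\<omega> \<in> space M"
    then have "X \<omega> \<in> space N1"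
      by (rule measurable_space[OF X])
    then show "(\<integral>\<^sup>+ y. f (X \<omega>, y) \<partial>distr M N2 Y) = (\<integral>\<^sup>+ \<omega>'. f (X \<omega>, Y \<omega>') \<partial>M)"
      using Y measurable_Pair2[OF f] by (subst nn_integral_distr) auto
  qed
  finally show ?thesis .
qed

end

section \<open>Independent unbiased stochastic gradients\<close>

text \<open>The sample \<open>\<xi> t\<close> selects the random function \<open>f\<^sub>t\<close>, and \<open>G t s x\<close> is the gradient at \<open>x\<close>
  of the function selected by the sample value \<open>s\<close>.\<close>
locale stochastic_gradients = prob_space M
  for M :: "'a measure" +
  fixes S :: "nat \<Rightarrow> 'b measure" and \<xi> :: "nat \<Rightarrow> 'a \<Rightarrow> 'b"
    and G :: "nat \<Rightarrow> 'b \<Rightarrow> real^'n::finite \<Rightarrow> real^'n" and Df :: "real^'n \<Rightarrow> real^'n" and T :: nat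
  assumes T_pos: "0 < T"
    and xi_measurable: "\<And>t. t < T \<Longrightarrow> \<xi> t \<in> measurable M (S t)"
    and xi_indep: "indep_vars S \<xi> {..<T}"
    and G_measurable: "\<And>t. t < T \<Longrightarrow> (\<lambda>(s, x). G t s x) \<in> borel_measurable (S t \<Otimes>\<^sub>M borel)"
    and G_integrable: "\<And>t x. t < T \<Longrightarrow> integrable M (\<lambda>\<omega>. G t (\<xi> t \<omega>) x)"
    and G_unbiased: "\<And>t x. t < T \<Longrightarrow> (\<integral>\<omega>. G t (\<xi> t \<omega>) x \<partial>M) = Df x"
begin

lemma Df_measurable: "Df \<in> borel_measurable borel"
proof -
  have "(\<lambda>p. (\<xi> 0 (snd p), fst p)) \<in> measurable (borel \<Otimes>\<^sub>M M) (S 0 \<Otimes>\<^sub>M borel)"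
    using T_pos by (intro measurable_Pair measurable_compose[OF measurable_snd xi_measurable] measurable_fst)
  from measurable_compose[OF this G_measurable[OF T_pos]]
  have "(\<lambda>(x, \<omega>). G 0 (\<xi> 0 \<omega>) x) \<in> borel_measurable (borel \<Otimes>\<^sub>M M)"
    by (simp add: case_prod_beta')
  then have "(\<lambda>x. \<integral>\<omega>. G 0 (\<xi> 0 \<omega>) x \<partial>M) \<in> borel_measurable borel"
    by (rule borel_measurable_lebesgue_integral)
  also have "(\<lambda>x. \<integral>\<omega>. G 0 (\<xi> 0 \<omega>) x \<partial>M) = Df"
    using G_unbiased[OF T_pos] by auto
  finally show ?thesis .
qed

lemma measurable_G_past:
  assumes "t < T" "t \<in> I" "X \<in> borel_measurable (PiM I S)"
  shows "(\<lambda>z. G t (z t) (X z)) \<in> borel_measurable (PiM I S)"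
proof -
  have "(\<lambda>z. (z t, X z)) \<in> measurable (PiM I S) (S t \<Otimes>\<^sub>M borel)"
    using assms by (intro measurable_Pair measurable_component_singleton) auto
  from measurable_compose[OF this G_measurable[OF assms(1)]] show ?thesis
    by simp
qed

lemma measurable_past: "k \<le> T \<Longrightarrow> (\<lambda>\<omega>. \<lambda>i\<in>{..<k}. \<xi> i \<omega>) \<in> measurable M (PiM {..<k} S)"
  by (intro measurable_restrict xi_measurable) auto

text \<open>Up to step \<open>k\<close> the run depends only on the samples \<open>\<xi> 0, \<dots>, \<xi> k\<close>; it is studied as a
  function of a sample path \<open>z\<close> in the product space, where independence can be used.\<close>
context
  fixes \<alpha> \<eta> :: real and sel :: "real^'n \<Rightarrow> real^'n" and x0 :: "real^'n"
  assumes sel_measurable: "sel \<in> borel_measurable borel"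
begin

lemma measurable_nsdm_past:
  assumes "k < T" "{..k} \<subseteq> I"
  shows "(\<lambda>z. fst (nsdm \<alpha> \<eta> sel (\<lambda>s. G s (z s)) x0 k)) \<in> borel_measurable (PiM I S)
    \<and> (\<lambda>z. snd (nsdm \<alpha> \<eta> sel (\<lambda>s. G s (z s)) x0 k)) \<in> borel_measurable (PiM I S)"
  using assms
proof (induction k)
  case 0
  then show ?case
    using measurable_G_past[of 0 I "\<lambda>z. x0"] by simp
next
  case (Suc k)
  have "{..k} \<subseteq> I" "Suc k \<in> I"
    using Suc.prems(2) by auto
  with Suc have x: "(\<lambda>z. fst (nsdm \<alpha> \<eta> sel (\<lambda>s. G s (z s)) x0 k)) \<in> borel_measurable (PiM I S)"
    and m: "(\<lambda>z. snd (nsdm \<alpha> \<eta> sel (\<lambda>s. G s (z s)) x0 k)) \<in> borel_measurable (PiM I S)"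
    by simp_all
  have "(\<lambda>z. sel (snd (nsdm \<alpha> \<eta> sel (\<lambda>s. G s (z s)) x0 k))) \<in> borel_measurable (PiM I S)"
    using measurable_compose[OF m sel_measurable] by simp
  then have x': "(\<lambda>z. fst (nsdm \<alpha> \<eta> sel (\<lambda>s. G s (z s)) x0 (Suc k))) \<in> borel_measurable (PiM I S)"
    unfolding fst_nsdm_Suc using x by measurable
  moreover have "(\<lambda>z. snd (nsdm \<alpha> \<eta> sel (\<lambda>s. G s (z s)) x0 (Suc k))) \<in> borel_measurable (PiM I S)"
    unfolding snd_nsdm_Suc using m measurable_G_past[OF Suc.prems(1) \<open>Suc k \<in> I\<close> x'] by measurable
  ultimately show ?case ..
qed

lemma measurable_iterate_Suc_past:
  assumes "k < T" "{..k} \<subseteq> I"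
  shows "(\<lambda>z. fst (nsdm \<alpha> \<eta> sel (\<lambda>s. G s (z s)) x0 (Suc k))) \<in> borel_measurable (PiM I S)"
proof -
  note past = measurable_nsdm_past[OF assms]
  have "(\<lambda>z. sel (snd (nsdm \<alpha> \<eta> sel (\<lambda>s. G s (z s)) x0 k))) \<in> borel_measurable (PiM I S)"
    using measurable_compose[OF conjunct2[OF past] sel_measurable] by simp
  then show ?thesis
    unfolding fst_nsdm_Suc using conjunct1[OF past] by measurable
qed

lemma measurable_noise_past:
  assumes "k < T" "{..k} \<subseteq> I"
  shows "(\<lambda>z. momentum_noise \<alpha> \<eta> sel Df (\<lambda>s. G s (z s)) x0 k) \<in> borel_measurable (PiM I S)"
  using assms
proof (induction k)
  case 0
  then show ?case
    using measurable_G_past[of 0 I "\<lambda>z. x0"] by simp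
next
  case (Suc k)
  have "{..k} \<subseteq> I" "Suc k \<in> I"
    using Suc.prems(2) by auto
  with Suc have noise: "(\<lambda>z. momentum_noise \<alpha> \<eta> sel Df (\<lambda>s. G s (z s)) x0 k) \<in> borel_measurable (PiM I S)"
    by simp
  have x': "(\<lambda>z. fst (nsdm \<alpha> \<eta> sel (\<lambda>s. G s (z s)) x0 (Suc k))) \<in> borel_measurable (PiM I S)"
    using Suc.prems(1) \<open>{..k} \<subseteq> I\<close> by (intro measurable_iterate_Suc_past) auto
  have "(\<lambda>z. Df (fst (nsdm \<alpha> \<eta> sel (\<lambda>s. G s (z s)) x0 (Suc k)))) \<in> borel_measurable (PiM I S)"
    using measurable_compose[OF x' Df_measurable] by simp
  then show ?case
    unfolding momentum_noise.simps(2)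
    using noise measurable_G_past[OF Suc.prems(1) \<open>Suc k \<in> I\<close> x'] by measurable
qed

lemma noise_measurable:
  assumes "t < T"
  shows "(\<lambda>\<omega>. momentum_noise \<alpha> \<eta> sel Df (\<lambda>s. G s (\<xi> s \<omega>)) x0 t) \<in> borel_measurable M"
proof -
  have "(\<lambda>\<omega>. momentum_noise \<alpha> \<eta> sel Df (\<lambda>s. G s ((\<lambda>i\<in>{..<Suc t}. \<xi> i \<omega>) s)) x0 t) \<in> borel_measurable M"
    using assms
    by (intro measurable_compose[OF measurable_past measurable_noise_past[where I = "{..<Suc t}"]]) auto
  also have "(\<lambda>\<omega>. momentum_noise \<alpha> \<eta> sel Df (\<lambda>s. G s ((\<lambda>i\<in>{..<Suc t}. \<xi> i \<omega>) s)) x0 t)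
      = (\<lambda>\<omega>. momentum_noise \<alpha> \<eta> sel Df (\<lambda>s. G s (\<xi> s \<omega>)) x0 t)"
    by (intro ext momentum_noise_cong) auto
  finally show ?thesis .
qed

end

end

lemma momentum_variance_step:
  fixes \<alpha> :: real
  assumes "0 \<le> \<alpha>" "\<alpha> \<le> 1"
  shows "(1 - \<alpha>)\<^sup>2 * ((1 - \<alpha>) ^ (2 * j) + \<alpha>) + \<alpha>\<^sup>2 \<le> (1 - \<alpha>) ^ (2 * Suc j) + \<alpha>"
proof -
  have key: "(1 - \<alpha>)\<^sup>2 * (r + \<alpha>) + \<alpha>\<^sup>2 \<le> (1 - \<alpha>)\<^sup>2 * r + \<alpha>" for r
  proof -
    have "(1 - \<alpha>)\<^sup>2 * (r + \<alpha>) + \<alpha>\<^sup>2 = (1 - \<alpha>)\<^sup>2 * r + (\<alpha> - \<alpha>\<^sup>2 * (1 - \<alpha>))"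
      by (simp add: power2_eq_square algebra_simps)
    moreover have "\<alpha>\<^sup>2 * (1 - \<alpha>) \<ge> 0"
      using assms by simp
    ultimately show ?thesis
      by linarith
  qed
  have "(1 - \<alpha>) ^ (2 * Suc j) = (1 - \<alpha>)\<^sup>2 * (1 - \<alpha>) ^ (2 * j)"
    by (metis mult_Suc_right power_add)
  then show ?thesis
    by (simp only: key)
qed

context stochastic_gradients
begin

lemma measurable_fresh_sample_update:
  assumes t: "t < T"
    and N: "N \<in> borel_measurable (PiM {..<t} S)" and X: "X \<in> borel_measurable (PiM {..<t} S)"
  shows "(\<lambda>p. N (fst p) + a *\<^sub>R (G t (snd p t) (X (fst p)) - Df (X (fst p))))
    \<in> borel_measurable (PiM {..<t} S \<Otimes>\<^sub>M PiM {t} S)"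
proof -
  have "(\<lambda>p. (snd p t, X (fst p))) \<in> measurable (PiM {..<t} S \<Otimes>\<^sub>M PiM {t} S) (S t \<Otimes>\<^sub>M borel)"
    using X by measurable
  from measurable_compose[OF this G_measurable[OF t]]
  have "(\<lambda>p. G t (snd p t) (X (fst p))) \<in> borel_measurable (PiM {..<t} S \<Otimes>\<^sub>M PiM {t} S)"
    by simp
  moreover have "(\<lambda>p. Df (X (fst p))) \<in> borel_measurable (PiM {..<t} S \<Otimes>\<^sub>M PiM {t} S)"
    using measurable_compose[OF X Df_measurable] by measurable
  moreover have "(\<lambda>p. N (fst p)) \<in> borel_measurable (PiM {..<t} S \<Otimes>\<^sub>M PiM {t} S)"
    using N by measurable
  ultimately show ?thesis
    by measurable
qed

context
  fixes A :: "real^'n^'n" and \<sigma> :: real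
  assumes A_nonneg: "\<And>v. 0 \<le> v \<bullet> (A *v v)"
    and variance: "\<And>t x. t < T \<Longrightarrow>
      (\<integral>\<^sup>+ \<omega>. ennreal ((G t (\<xi> t \<omega>) x - Df x) \<bullet> (A *v (G t (\<xi> t \<omega>) x - Df x))) \<partial>M) \<le> ennreal (\<sigma>\<^sup>2)"
begin

abbreviation quad :: "real^'n \<Rightarrow> real" where
  "quad v \<equiv> v \<bullet> (A *v v)"

text \<open>The new sample \<open>\<xi> t\<close> is independent of the past samples, which determine \<open>N\<close> and the
  evaluation point \<open>X\<close>; integrating it out first removes the cross term.\<close>
lemma nn_integral_quad_form_fresh_sample:
  assumes t: "t < T"
    and N: "N \<in> borel_measurable (PiM {..<t} S)" and X: "X \<in> borel_measurable (PiM {..<t} S)"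
  shows "(\<integral>\<^sup>+ \<omega>. ennreal (quad (N (\<lambda>i\<in>{..<t}. \<xi> i \<omega>)
      + a *\<^sub>R (G t (\<xi> t \<omega>) (X (\<lambda>i\<in>{..<t}. \<xi> i \<omega>)) - Df (X (\<lambda>i\<in>{..<t}. \<xi> i \<omega>))))) \<partial>M)
    \<le> (\<integral>\<^sup>+ \<omega>. ennreal (quad (N (\<lambda>i\<in>{..<t}. \<xi> i \<omega>))) \<partial>M) + ennreal (a\<^sup>2 * \<sigma>\<^sup>2)"
proof -
  define past where "past \<omega> = (\<lambda>i\<in>{..<t}. \<xi> i \<omega>)" for \<omega>
  define present where "present \<omega> = (\<lambda>i\<in>{t}. \<xi> i \<omega>)" for \<omega>
  define \<Phi> where "\<Phi> p = ennreal (quad (N (fst p) + a *\<^sub>R (G t (snd p t) (X (fst p)) - Df (X (fst p)))))" for p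
  have indep: "indep_var (PiM {..<t} S) past (PiM {t} S) present"
    unfolding past_def present_def using t by (intro indep_var_restrict[OF xi_indep]) auto
  have "(\<lambda>p. N (fst p) + a *\<^sub>R (G t (snd p t) (X (fst p)) - Df (X (fst p))))
      \<in> borel_measurable (PiM {..<t} S \<Otimes>\<^sub>M PiM {t} S)"
    by (rule measurable_fresh_sample_update[OF t N X])
  then have \<Phi>_measurable: "\<Phi> \<in> borel_measurable (PiM {..<t} S \<Otimes>\<^sub>M PiM {t} S)"
    unfolding \<Phi>_def by (intro measurable_compose[OF _ measurable_ennreal] borel_measurable_quad_form)
  have "(\<integral>\<^sup>+ \<omega>. \<Phi> (past \<omega>, present \<omega>) \<partial>M) = (\<integral>\<^sup>+ \<omega>. \<integral>\<^sup>+ \<omega>'. \<Phi> (past \<omega>, present \<omega>') \<partial>M \<partial>M)"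
    by (rule nn_integral_indep_var[OF indep \<Phi>_measurable])
  also have "\<dots> \<le> (\<integral>\<^sup>+ \<omega>. ennreal (quad (N (past \<omega>)) + a\<^sup>2 * \<sigma>\<^sup>2) \<partial>M)"
  proof (rule nn_integral_mono)
    fix \<omega>
    let ?x = "X (past \<omega>)"
    have "(\<integral>\<^sup>+ \<omega>'. ennreal (quad (N (past \<omega>) + a *\<^sub>R (G t (\<xi> t \<omega>') ?x - Df ?x))) \<partial>M)
        \<le> ennreal (quad (N (past \<omega>)) + a\<^sup>2 * \<sigma>\<^sup>2)"
    proof (rule nn_integral_quad_form_shift_centered[OF _ _ A_nonneg variance[OF t]])
      show "integrable M (\<lambda>\<omega>'. G t (\<xi> t \<omega>') ?x - Df ?x)"
        using G_integrable[OF t] by simp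
      show "(\<integral>\<omega>'. G t (\<xi> t \<omega>') ?x - Df ?x \<partial>M) = 0"
        using G_integrable[OF t] G_unbiased[OF t] by (simp add: prob_space)
    qed simp
    then show "(\<integral>\<^sup>+ \<omega>'. \<Phi> (past \<omega>, present \<omega>') \<partial>M) \<le> ennreal (quad (N (past \<omega>)) + a\<^sup>2 * \<sigma>\<^sup>2)"
      by (simp add: \<Phi>_def present_def)
  qed
  also have "\<dots> = (\<integral>\<^sup>+ \<omega>. ennreal (quad (N (past \<omega>))) \<partial>M) + ennreal (a\<^sup>2 * \<sigma>\<^sup>2)"
  proof -
    have "past \<in> measurable M (PiM {..<t} S)"
      unfolding past_def using t by (intro measurable_past) simp
    from borel_measurable_quad_form[OF measurable_compose[OF this N]]
    have "(\<lambda>\<omega>. ennreal (quad (N (past \<omega>)))) \<in> borel_measurable M"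
      by (rule measurable_compose[OF _ measurable_ennreal])
    then have "(\<integral>\<^sup>+ \<omega>. ennreal (quad (N (past \<omega>))) + ennreal (a\<^sup>2 * \<sigma>\<^sup>2) \<partial>M)
        = (\<integral>\<^sup>+ \<omega>. ennreal (quad (N (past \<omega>))) \<partial>M) + ennreal (a\<^sup>2 * \<sigma>\<^sup>2)"
      by (simp add: nn_integral_add emeasure_space_1)
    then show ?thesis
      using A_nonneg by simp
  qed
  finally show ?thesis
    by (simp add: \<Phi>_def past_def present_def)
qed

context
  fixes \<alpha> \<eta> :: real and sel :: "real^'n \<Rightarrow> real^'n" and x0 :: "real^'n"
  assumes sel_measurable: "sel \<in> borel_measurable borel"
    and alpha: "0 < \<alpha>" "\<alpha> \<le> 1"
begin

abbreviation noise :: "nat \<Rightarrow> 'a \<Rightarrow> real^'n" where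
  "noise t \<omega> \<equiv> momentum_noise \<alpha> \<eta> sel Df (\<lambda>s. G s (\<xi> s \<omega>)) x0 t"

lemma noise_second_moment_Suc:
  assumes t: "Suc j < T"
  shows "(\<integral>\<^sup>+ \<omega>. ennreal (quad (noise (Suc j) \<omega>)) \<partial>M)
    \<le> ennreal ((1 - \<alpha>)\<^sup>2) * (\<integral>\<^sup>+ \<omega>. ennreal (quad (noise j \<omega>)) \<partial>M) + ennreal (\<alpha>\<^sup>2 * \<sigma>\<^sup>2)"
proof -
  define Nz where "Nz z = momentum_noise \<alpha> \<eta> sel Df (\<lambda>s. G s (z s)) x0 j" for z
  define Xz where "Xz z = fst (nsdm \<alpha> \<eta> sel (\<lambda>s. G s (z s)) x0 (Suc j))" for z
  have Nz_measurable: "(\<lambda>z. (1 - \<alpha>) *\<^sub>R Nz z) \<in> borel_measurable (PiM {..<Suc j} S)"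
    unfolding Nz_def using t by (intro borel_measurable_scaleR measurable_noise_past[OF sel_measurable]) auto
  have Xz_measurable: "Xz \<in> borel_measurable (PiM {..<Suc j} S)"
    unfolding Xz_def using t by (intro measurable_iterate_Suc_past[OF sel_measurable]) auto
  have Nz_past: "Nz (\<lambda>i\<in>{..<Suc j}. \<xi> i \<omega>) = noise j \<omega>" for \<omega>
    unfolding Nz_def by (rule momentum_noise_cong) auto
  have Xz_past: "Xz (\<lambda>i\<in>{..<Suc j}. \<xi> i \<omega>) = fst (nsdm \<alpha> \<eta> sel (\<lambda>s. G s (\<xi> s \<omega>)) x0 (Suc j))" for \<omega>
  proof -
    have "nsdm \<alpha> \<eta> sel (\<lambda>s. G s ((\<lambda>i\<in>{..<Suc j}. \<xi> i \<omega>) s)) x0 j = nsdm \<alpha> \<eta> sel (\<lambda>s. G s (\<xi> s \<omega>)) x0 j"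
      by (rule nsdm_cong) simp
    then show ?thesis
      by (simp only: Xz_def fst_nsdm_Suc)
  qed
  have "(\<integral>\<^sup>+ \<omega>. ennreal (quad (noise (Suc j) \<omega>)) \<partial>M)
      \<le> (\<integral>\<^sup>+ \<omega>. ennreal (quad ((1 - \<alpha>) *\<^sub>R Nz (\<lambda>i\<in>{..<Suc j}. \<xi> i \<omega>))) \<partial>M) + ennreal (\<alpha>\<^sup>2 * \<sigma>\<^sup>2)"
    using nn_integral_quad_form_fresh_sample[OF t Nz_measurable Xz_measurable, of \<alpha>]
    by (simp add: Nz_past Xz_past del: nsdm.simps)
  also have "(\<integral>\<^sup>+ \<omega>. ennreal (quad ((1 - \<alpha>) *\<^sub>R Nz (\<lambda>i\<in>{..<Suc j}. \<xi> i \<omega>))) \<partial>M)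
      = ennreal ((1 - \<alpha>)\<^sup>2) * (\<integral>\<^sup>+ \<omega>. ennreal (quad (noise j \<omega>)) \<partial>M)"
    using borel_measurable_quad_form[OF noise_measurable[OF sel_measurable, of j]] t
    by (simp only: Nz_past quad_form_scaleR ennreal_mult[OF zero_le_power2 A_nonneg])
       (simp add: nn_integral_cmult)
  finally show ?thesis .
qed

lemma noise_second_moment:
  "t < T \<Longrightarrow> (\<integral>\<^sup>+ \<omega>. ennreal (quad (noise t \<omega>)) \<partial>M) \<le> ennreal (\<sigma>\<^sup>2 * ((1 - \<alpha>) ^ (2 * t) + \<alpha>))"
proof (induction t)
  case 0
  have "(\<integral>\<^sup>+ \<omega>. ennreal (quad (noise 0 \<omega>)) \<partial>M) \<le> ennreal (\<sigma>\<^sup>2)"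
    using variance[OF 0, of x0] by simp
  also have "\<dots> \<le> ennreal (\<sigma>\<^sup>2 * ((1 - \<alpha>) ^ (2 * 0) + \<alpha>))"
    using alpha by (intro ennreal_leI) (simp add: distrib_left)
  finally show ?case .
next
  case (Suc j)
  have "(\<integral>\<^sup>+ \<omega>. ennreal (quad (noise (Suc j) \<omega>)) \<partial>M)
      \<le> ennreal ((1 - \<alpha>)\<^sup>2) * (\<integral>\<^sup>+ \<omega>. ennreal (quad (noise j \<omega>)) \<partial>M) + ennreal (\<alpha>\<^sup>2 * \<sigma>\<^sup>2)"
    by (rule noise_second_moment_Suc[OF Suc.prems])
  also have "\<dots> \<le> ennreal ((1 - \<alpha>)\<^sup>2) * ennreal (\<sigma>\<^sup>2 * ((1 - \<alpha>) ^ (2 * j) + \<alpha>)) + ennreal (\<alpha>\<^sup>2 * \<sigma>\<^sup>2)"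
    using Suc by (intro add_mono mult_left_mono) auto
  also have "\<dots> = ennreal (\<sigma>\<^sup>2 * ((1 - \<alpha>)\<^sup>2 * ((1 - \<alpha>) ^ (2 * j) + \<alpha>) + \<alpha>\<^sup>2))"
    using alpha by (simp add: ennreal_mult[symmetric] ennreal_plus[symmetric] algebra_simps del: ennreal_plus)
  also have "\<dots> \<le> ennreal (\<sigma>\<^sup>2 * ((1 - \<alpha>) ^ (2 * Suc j) + \<alpha>))"
    using momentum_variance_step[of \<alpha> j] alpha by (intro ennreal_leI mult_left_mono) auto
  finally show ?case .
qed

lemma expected_mnorm_noise_le:
  assumes sigma: "0 < \<sigma>" and "t < T"
  shows "(\<integral>\<^sup>+ \<omega>. ennreal (mnorm A (noise t \<omega>)) \<partial>M) \<le> ennreal (\<sigma> * ((1 - \<alpha>) ^ t + sqrt \<alpha>))"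
proof -
  define c where "c = \<sigma> * sqrt ((1 - \<alpha>) ^ (2 * t) + \<alpha>)"
  have "(\<integral>\<^sup>+ \<omega>. ennreal (mnorm A (noise t \<omega>)) \<partial>M) \<le> ennreal c"
  proof (rule nn_integral_le_of_second_moment)
    show "(\<lambda>\<omega>. mnorm A (noise t \<omega>)) \<in> borel_measurable M"
      by (intro borel_measurable_mnorm noise_measurable[OF sel_measurable assms(2)])
    show "0 \<le> mnorm A (noise t \<omega>)" for \<omega>
      by (simp add: mnorm_def A_nonneg)
    show "0 < c"
      unfolding c_def using sigma alpha by (intro mult_pos_pos) (auto intro: add_nonneg_pos)
    have "(\<integral>\<^sup>+ \<omega>. ennreal ((mnorm A (noise t \<omega>))\<^sup>2) \<partial>M) = (\<integral>\<^sup>+ \<omega>. ennreal (quad (noise t \<omega>)) \<partial>M)"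
      using A_nonneg by (simp add: mnorm_def)
    also have "\<dots> \<le> ennreal (\<sigma>\<^sup>2 * ((1 - \<alpha>) ^ (2 * t) + \<alpha>))"
      by (rule noise_second_moment[OF assms(2)])
    also have "\<sigma>\<^sup>2 * ((1 - \<alpha>) ^ (2 * t) + \<alpha>) = c\<^sup>2"
      unfolding c_def using alpha by (simp add: power_mult_distrib)
    finally show "(\<integral>\<^sup>+ \<omega>. ennreal ((mnorm A (noise t \<omega>))\<^sup>2) \<partial>M) \<le> ennreal (c\<^sup>2)" .
  qed
  also have "c \<le> \<sigma> * ((1 - \<alpha>) ^ t + sqrt \<alpha>)"
  proof -
    have "sqrt (((1 - \<alpha>) ^ t)\<^sup>2 + \<alpha>) \<le> sqrt (((1 - \<alpha>) ^ t)\<^sup>2) + sqrt \<alpha>"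
      using alpha by (intro sqrt_add_le_add_sqrt) auto
    also have "sqrt (((1 - \<alpha>) ^ t)\<^sup>2) = (1 - \<alpha>) ^ t"
      using alpha by simp
    also have "((1 - \<alpha>) ^ t)\<^sup>2 = (1 - \<alpha>) ^ (2 * t)"
      by (simp add: power_mult[symmetric] mult.commute)
    finally show ?thesis
      unfolding c_def using sigma by (intro mult_left_mono) auto
  qed
  then have "ennreal c \<le> ennreal (\<sigma> * ((1 - \<alpha>) ^ t + sqrt \<alpha>))"
    by (rule ennreal_leI)
  finally show ?thesis .
qed

end

end

end

section \<open>The convergence bound\<close>

lemma momentum_weight_sum_le:
  assumes alpha: "0 < \<alpha>" "\<alpha> < 1" and T: "0 < T" and sigma: "0 \<le> \<sigma>"
  shows "(2 / real T) * (\<Sum>t<T. \<sigma> * ((1 - \<alpha>) ^ t + sqrt \<alpha>)) \<le> \<sigma> * (2 / (\<alpha> * real T) + 2 * sqrt \<alpha>)"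
proof -
  have "(\<Sum>t<T. (1 - \<alpha>) ^ t) = (1 - (1 - \<alpha>) ^ T) / \<alpha>"
    using alpha by (simp add: sum_gp_strict)
  also have "\<dots> \<le> 1 / \<alpha>"
    using alpha by (intro divide_right_mono) auto
  finally have "\<sigma> * (\<Sum>t<T. (1 - \<alpha>) ^ t) + \<sigma> * real T * sqrt \<alpha> \<le> \<sigma> * (1 / \<alpha>) + \<sigma> * real T * sqrt \<alpha>"
    using sigma by (intro add_right_mono mult_left_mono)
  moreover have "(\<Sum>t<T. \<sigma> * ((1 - \<alpha>) ^ t + sqrt \<alpha>)) = \<sigma> * (\<Sum>t<T. (1 - \<alpha>) ^ t) + \<sigma> * real T * sqrt \<alpha>"
    by (simp add: distrib_left sum.distrib sum_distrib_left)
  ultimately have "(\<Sum>t<T. \<sigma> * ((1 - \<alpha>) ^ t + sqrt \<alpha>)) \<le> \<sigma> * (1 / \<alpha>) + \<sigma> * real T * sqrt \<alpha>"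
    by simp
  then have "(2 / real T) * (\<Sum>t<T. \<sigma> * ((1 - \<alpha>) ^ t + sqrt \<alpha>))
      \<le> (2 / real T) * (\<sigma> * (1 / \<alpha>) + \<sigma> * real T * sqrt \<alpha>)"
    using T by (intro mult_left_mono) auto
  also have "\<dots> = \<sigma> * (2 / (\<alpha> * real T) + 2 * sqrt \<alpha>)"
    using T alpha by (simp add: field_simps)
  finally show ?thesis .
qed

lemma ennreal_add_mult_sum:
  assumes "0 \<le> a" "0 \<le> b" "\<And>t. t \<in> I \<Longrightarrow> 0 \<le> w t"
  shows "ennreal (a + b * (\<Sum>t\<in>I. w t)) = ennreal a + ennreal b * (\<Sum>t\<in>I. ennreal (w t))"
proof -
  have sum_nonneg: "0 \<le> (\<Sum>t\<in>I. w t)"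
    using assms(3) by (simp add: sum_nonneg)
  have "ennreal (a + b * (\<Sum>t\<in>I. w t)) = ennreal a + ennreal (b * (\<Sum>t\<in>I. w t))"
    using assms sum_nonneg by (intro ennreal_plus) auto
  also have "ennreal (b * (\<Sum>t\<in>I. w t)) = ennreal b * ennreal (\<Sum>t\<in>I. w t)"
    using assms sum_nonneg by (intro ennreal_mult) auto
  also have "ennreal (\<Sum>t\<in>I. w t) = (\<Sum>t\<in>I. ennreal (w t))"
    using assms(3) by simp
  finally show ?thesis .
qed

lemma ennreal_le_affine_of_greater:
  assumes le: "\<And>s. \<sigma> < s \<Longrightarrow> x \<le> ennreal (a + s * K)"
    and "0 \<le> a" "0 \<le> \<sigma>" "0 < K"
  shows "x \<le> ennreal (a + \<sigma> * K)"
proof (rule ennreal_le_epsilon)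
  fix e :: real assume "0 < e"
  have "x \<le> ennreal (a + (\<sigma> + e / K) * K)"
    using \<open>0 < e\<close> \<open>0 < K\<close> by (intro le) simp
  also have "a + (\<sigma> + e / K) * K = (a + \<sigma> * K) + e"
    using \<open>0 < K\<close> by (simp add: field_simps)
  also have "ennreal ((a + \<sigma> * K) + e) = ennreal (a + \<sigma> * K) + ennreal e"
    using assms \<open>0 < e\<close> by (intro ennreal_plus) auto
  finally show "x \<le> ennreal (a + \<sigma> * K) + ennreal e" .
qed

lemma (in prob_space) nn_integral_affine_sum_le:
  assumes "finite I" "0 \<le> a" "0 \<le> b"
    and W: "\<And>t. t \<in> I \<Longrightarrow> W t \<in> borel_measurable M" "\<And>t \<omega>. 0 \<le> W t \<omega>"
    and c: "\<And>t. t \<in> I \<Longrightarrow> (\<integral>\<^sup>+ \<omega>. ennreal (W t \<omega>) \<partial>M) \<le> ennreal (c t)" "\<And>t. 0 \<le> c t"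
  shows "(\<integral>\<^sup>+ \<omega>. ennreal (a + b * (\<Sum>t\<in>I. W t \<omega>)) \<partial>M) \<le> ennreal (a + b * (\<Sum>t\<in>I. c t))"
proof -
  have "(\<integral>\<^sup>+ \<omega>. ennreal (a + b * (\<Sum>t\<in>I. W t \<omega>)) \<partial>M)
      = (\<integral>\<^sup>+ \<omega>. ennreal a + ennreal b * (\<Sum>t\<in>I. ennreal (W t \<omega>)) \<partial>M)"
    using assms by (simp add: ennreal_add_mult_sum)
  also have "\<dots> = ennreal a + ennreal b * (\<Sum>t\<in>I. \<integral>\<^sup>+ \<omega>. ennreal (W t \<omega>) \<partial>M)"
    using W nn_integral_sum[of I "\<lambda>t \<omega>. ennreal (W t \<omega>)" M]
    by (simp add: nn_integral_add nn_integral_cmult borel_measurable_sum emeasure_space_1)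
  also have "\<dots> \<le> ennreal a + ennreal b * (\<Sum>t\<in>I. ennreal (c t))"
    using c by (intro add_mono mult_left_mono sum_mono) auto
  also have "\<dots> = ennreal (a + b * (\<Sum>t\<in>I. c t))"
    using assms by (simp add: ennreal_add_mult_sum)
  finally show ?thesis .
qed

context stochastic_gradients
begin

lemma expected_average_dualH_grad_le:
  fixes f :: "real^'n \<Rightarrow> real"
  assumes path: "nsdm_path Hs \<alpha> \<eta> L Df sel"
    and f_grad: "\<And>x. (f has_derivative (\<lambda>h. Df x \<bullet> h)) (at x)" and f_bdd: "bdd_below (range f)"
    and sel_measurable: "sel \<in> borel_measurable borel"
    and H: "H \<in> Hs" "pd_mat H" "trace H \<le> 1" and sigma: "0 < \<sigma>"
    and variance: "\<And>t x. t < T \<Longrightarrow>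
      (\<integral>\<^sup>+ \<omega>. ennreal ((mnorm (matrix_inv H) (G t (\<xi> t \<omega>) x - Df x))\<^sup>2) \<partial>M) \<le> ennreal (\<sigma>\<^sup>2)"
  shows "(\<integral>\<^sup>+ \<omega>. ennreal ((1 / real T) * (\<Sum>t<T. dualH Hs (Df (fst (nsdm \<alpha> \<eta> sel (\<lambda>s. G s (\<xi> s \<omega>)) x0 t))))) \<partial>M)
    \<le> ennreal ((f x0 - Inf (range f)) / (\<eta> * real T) + 2 * \<eta> / \<alpha> * L + \<sigma> * (2 / (\<alpha> * real T) + 2 * sqrt \<alpha>))"
proof -
  interpret preconditioner_set Hs
    by (rule nsdm_path.axioms(1)[OF path])
  have alpha: "0 < \<alpha>" "\<alpha> < 1" and eta: "0 < \<eta>" and L: "0 \<le> L"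
    using nsdm_path.alpha[OF path] nsdm_path.eta[OF path] lip_set_nonneg[OF nsdm_path.lipschitz[OF path]]
    by auto
  define A0 where "A0 = (f x0 - Inf (range f)) / (\<eta> * real T) + 2 * \<eta> / \<alpha> * L"
  define W where "W t \<omega> = mnorm (matrix_inv H) (momentum_noise \<alpha> \<eta> sel Df (\<lambda>s. G s (\<xi> s \<omega>)) x0 t)" for t \<omega>
  have pathwise: "(1 / real T) * (\<Sum>t<T. dualH Hs (Df (fst (nsdm \<alpha> \<eta> sel (\<lambda>s. G s (\<xi> s \<omega>)) x0 t))))
      \<le> A0 + (2 / real T) * (\<Sum>t<T. W t \<omega>)" for \<omega>
    unfolding A0_def W_def by (rule nsdm_path.average_dualH_grad_le_mnorm[OF path f_grad f_bdd T_pos H])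
  have "(\<integral>\<^sup>+ \<omega>. ennreal ((1 / real T) * (\<Sum>t<T. dualH Hs (Df (fst (nsdm \<alpha> \<eta> sel (\<lambda>s. G s (\<xi> s \<omega>)) x0 t))))) \<partial>M)
      \<le> (\<integral>\<^sup>+ \<omega>. ennreal (A0 + (2 / real T) * (\<Sum>t<T. W t \<omega>)) \<partial>M)"
    by (intro nn_integral_mono ennreal_leI pathwise)
  also have "\<dots> \<le> ennreal (A0 + (2 / real T) * (\<Sum>t<T. \<sigma> * ((1 - \<alpha>) ^ t + sqrt \<alpha>)))"
  proof (rule nn_integral_affine_sum_le)
    show "0 \<le> A0"
      using f_bdd eta T_pos alpha L by (auto simp: A0_def cInf_lower)
    show "W t \<in> borel_measurable M" if "t \<in> {..<T}" for t
      unfolding W_def using that by (intro borel_measurable_mnorm noise_measurable sel_measurable) simp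
    show "0 \<le> W t \<omega>" for t \<omega>
      by (simp add: W_def mnorm_def matrix_inv_quad_form_nonneg[OF H(2)])
    show "(\<integral>\<^sup>+ \<omega>. ennreal (W t \<omega>) \<partial>M) \<le> ennreal (\<sigma> * ((1 - \<alpha>) ^ t + sqrt \<alpha>))" if "t \<in> {..<T}" for t
      unfolding W_def
    proof (rule expected_mnorm_noise_le[OF _ _ sel_measurable alpha(1) less_imp_le[OF alpha(2)] sigma])
      show "0 \<le> v \<bullet> (matrix_inv H *v v)" for v
        by (rule matrix_inv_quad_form_nonneg[OF H(2)])
      show "(\<integral>\<^sup>+ \<omega>. ennreal ((G t (\<xi> t \<omega>) x - Df x) \<bullet> (matrix_inv H *v (G t (\<xi> t \<omega>) x - Df x))) \<partial>M)
          \<le> ennreal (\<sigma>\<^sup>2)" if "t < T" for t x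
        using variance[OF that, of x] by (simp add: mnorm_def matrix_inv_quad_form_nonneg[OF H(2)])
    qed (use that in simp)
  qed (use sigma alpha in auto)
  also have "\<dots> \<le> ennreal (A0 + \<sigma> * (2 / (\<alpha> * real T) + 2 * sqrt \<alpha>))"
    using momentum_weight_sum_le[OF alpha T_pos] sigma by (intro ennreal_leI) simp
  finally show ?thesis
    unfolding A0_def .
qed

lemma adaptive_var2_less_imp_preconditioner:
  assumes "adaptive_var2 M Hs T (\<lambda>t x \<omega>. G t (\<xi> t \<omega>) x) < ennreal c"
  obtains H where "H \<in> Hs" "pd_mat H" "trace H \<le> 1"
    and "\<And>t x. t < T \<Longrightarrow> (\<integral>\<^sup>+ \<omega>. ennreal ((mnorm (matrix_inv H) (G t (\<xi> t \<omega>) x - Df x))\<^sup>2) \<partial>M) \<le> ennreal c"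
proof -
  from assms obtain H where H: "H \<in> Hs" "pd_mat H" "trace H \<le> 1"
    and sup: "(SUP tx \<in> {..<T} \<times> UNIV. \<integral>\<^sup>+ \<omega>. ennreal ((mnorm (matrix_inv H)
        (G (fst tx) (\<xi> (fst tx) \<omega>) (snd tx) - (\<integral>\<omega>'. G (fst tx) (\<xi> (fst tx) \<omega>') (snd tx) \<partial>M)))\<^sup>2) \<partial>M)
      < ennreal c"
    unfolding adaptive_var2_def INF_less_iff by blast
  have "(\<integral>\<^sup>+ \<omega>. ennreal ((mnorm (matrix_inv H) (G t (\<xi> t \<omega>) x - Df x))\<^sup>2) \<partial>M) \<le> ennreal c"
    if "t < T" for t x
  proof -
    have "(\<integral>\<^sup>+ \<omega>. ennreal ((mnorm (matrix_inv H) (G t (\<xi> t \<omega>) x - Df x))\<^sup>2) \<partial>M)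
        \<le> (SUP tx \<in> {..<T} \<times> UNIV. \<integral>\<^sup>+ \<omega>. ennreal ((mnorm (matrix_inv H)
          (G (fst tx) (\<xi> (fst tx) \<omega>) (snd tx) - (\<integral>\<omega>'. G (fst tx) (\<xi> (fst tx) \<omega>') (snd tx) \<partial>M)))\<^sup>2) \<partial>M)"
      using that G_unbiased[OF that, of x] by (intro SUP_upper2[where i = "(t, x)"]) auto
    then show ?thesis
      using sup by simp
  qed
  then show ?thesis
    by (rule that[OF H])
qed

lemma expected_average_dualH_grad_le_adaptive_var2:
  fixes f :: "real^'n \<Rightarrow> real"
  assumes path: "nsdm_path Hs \<alpha> \<eta> L Df sel"
    and f_grad: "\<And>x. (f has_derivative (\<lambda>h. Df x \<bullet> h)) (at x)" and f_bdd: "bdd_below (range f)"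
    and sel_measurable: "sel \<in> borel_measurable borel"
    and sigma: "0 \<le> \<sigma>" and var: "adaptive_var2 M Hs T (\<lambda>t x \<omega>. G t (\<xi> t \<omega>) x) \<le> ennreal (\<sigma>\<^sup>2)"
  shows "(\<integral>\<^sup>+ \<omega>. ennreal ((1 / real T) * (\<Sum>t<T. dualH Hs (Df (fst (nsdm \<alpha> \<eta> sel (\<lambda>s. G s (\<xi> s \<omega>)) x0 t))))) \<partial>M)
    \<le> ennreal ((f x0 - Inf (range f)) / (\<eta> * real T) + 2 * \<eta> / \<alpha> * L + \<sigma> * (2 / (\<alpha> * real T) + 2 * sqrt \<alpha>))"
proof (rule ennreal_le_affine_of_greater)
  \<comment> \<open>\<open>adaptive_var2\<close> is an infimum over preconditioners, attained only up to any \<open>\<sigma>' > \<sigma>\<close>.\<close>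
  fix \<sigma>' assume "\<sigma> < \<sigma>'"
  with sigma var have "adaptive_var2 M Hs T (\<lambda>t x \<omega>. G t (\<xi> t \<omega>) x) < ennreal (\<sigma>'\<^sup>2)"
    by (simp add: ennreal_lessI power_strict_mono order_le_less_trans)
  then obtain H where H: "H \<in> Hs" "pd_mat H" "trace H \<le> 1"
    and H_var: "\<And>t x. t < T \<Longrightarrow>
      (\<integral>\<^sup>+ \<omega>. ennreal ((mnorm (matrix_inv H) (G t (\<xi> t \<omega>) x - Df x))\<^sup>2) \<partial>M) \<le> ennreal (\<sigma>'\<^sup>2)"
    by (rule adaptive_var2_less_imp_preconditioner) blast
  have "0 < \<sigma>'"
    using \<open>\<sigma> < \<sigma>'\<close> sigma by simp
  from expected_average_dualH_grad_le[OF path f_grad f_bdd sel_measurable H this H_var]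
  show "(\<integral>\<^sup>+ \<omega>. ennreal ((1 / real T) * (\<Sum>t<T. dualH Hs (Df (fst (nsdm \<alpha> \<eta> sel (\<lambda>s. G s (\<xi> s \<omega>)) x0 t))))) \<partial>M)
    \<le> ennreal ((f x0 - Inf (range f)) / (\<eta> * real T) + 2 * \<eta> / \<alpha> * L + \<sigma>' * (2 / (\<alpha> * real T) + 2 * sqrt \<alpha>))" .
next
  show "0 \<le> (f x0 - Inf (range f)) / (\<eta> * real T) + 2 * \<eta> / \<alpha> * L"
    using nsdm_path.alpha[OF path] nsdm_path.eta[OF path] f_bdd T_pos
      preconditioner_set.lip_set_nonneg[OF nsdm_path.axioms(1)[OF path] nsdm_path.lipschitz[OF path]]
    by (auto simp: cInf_lower)
  show "0 < 2 / (\<alpha> * real T) + 2 * sqrt \<alpha>"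
    using nsdm_path.alpha[OF path] T_pos by (intro add_pos_pos) auto
qed (rule sigma)

end

theorem theorem4p2:
  fixes Hs :: "(real^'n::finite^'n) set"
    and \<alpha> \<eta> \<sigma> :: real and T :: nat
    and f :: "real^'n \<Rightarrow> real" and Df :: "real^'n \<Rightarrow> real^'n" and x0 :: "real^'n"
    and M :: "'a measure" and S :: "nat \<Rightarrow> 'b measure" and \<xi> :: "nat \<Rightarrow> 'a \<Rightarrow> 'b"
    and F :: "nat \<Rightarrow> 'b \<Rightarrow> real^'n \<Rightarrow> real" and G :: "nat \<Rightarrow> 'b \<Rightarrow> real^'n \<Rightarrow> real^'n"
    and sel :: "real^'n \<Rightarrow> real^'n"
  assumes ws: "well_structured Hs"
    and alpha: "0 < \<alpha>" "\<alpha> < 1"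
    and eta: "0 < \<eta>"
    and T: "1 \<le> T"
    and f_grad: "\<And>x. (f has_derivative (\<lambda>h. Df x \<bullet> h)) (at x)"
    and f_bdd: "bdd_below (range f)"
    and f_smooth: "lip_set Hs Df \<noteq> {}"
    and prob: "prob_space M"
    and xi_meas: "\<And>t. t < T \<Longrightarrow> \<xi> t \<in> measurable M (S t)"
    and indep: "prob_space.indep_vars M S \<xi> {..<T}"
    and F_grad: "\<And>t s x. t < T \<Longrightarrow> s \<in> space (S t) \<Longrightarrow>
                   (F t s has_derivative (\<lambda>h. G t s x \<bullet> h)) (at x)"
    and G_meas: "\<And>t. t < T \<Longrightarrow> (\<lambda>(s, x). G t s x) \<in> borel_measurable (S t \<Otimes>\<^sub>M borel)"
    and unbiased_int: "\<And>t x. t < T \<Longrightarrow> integrable M (\<lambda>\<omega>. G t (\<xi> t \<omega>) x)"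
    and unbiased: "\<And>t x. t < T \<Longrightarrow> (\<integral>\<omega>. G t (\<xi> t \<omega>) x \<partial>M) = Df x"
    and sigma: "0 \<le> \<sigma>"
    and var: "adaptive_var2 M Hs T (\<lambda>t x \<omega>. G t (\<xi> t \<omega>) x) \<le> ennreal (\<sigma>\<^sup>2)"
    and sel: "is_argmax_sel (normH Hs) sel"
    and sel_meas: "sel \<in> borel_measurable borel"
  shows "(\<integral>\<^sup>+ \<omega>. ennreal ((1 / real T) *
            (\<Sum>t<T. dualH Hs (Df (fst (nsdm \<alpha> \<eta> sel (\<lambda>t x. G t (\<xi> t \<omega>) x) x0 t))))) \<partial>M)
         \<le> ennreal ((f x0 - Inf (range f)) / (\<eta> * real T)
                    + 2 * \<eta> / \<alpha> * lip_const Hs Df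
                    + 2 * \<sigma> / (\<alpha> * real T)
                    + 2 * \<sigma> * sqrt \<alpha>)"
proof -
  \<comment> \<open>Only the stochastic gradients \<open>G\<close> enter the algorithm.\<close>
  interpret stochastic_gradients M S \<xi> G Df T
    using prob T xi_meas indep G_meas unbiased_int unbiased
    by (simp add: stochastic_gradients_def stochastic_gradients_axioms_def)
  have "nsdm_path Hs \<alpha> \<eta> (lip_const Hs Df) Df sel"
    using ws alpha eta sel preconditioner_set.lip_const_mem_lip_set[OF _ f_smooth]
    by (simp add: nsdm_path_def nsdm_path_axioms_def preconditioner_set_def)
  then have "(\<integral>\<^sup>+ \<omega>. ennreal ((1 / real T) *
      (\<Sum>t<T. dualH Hs (Df (fst (nsdm \<alpha> \<eta> sel (\<lambda>t. G t (\<xi> t \<omega>)) x0 t))))) \<partial>M)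
    \<le> ennreal ((f x0 - Inf (range f)) / (\<eta> * real T) + 2 * \<eta> / \<alpha> * lip_const Hs Df
      + \<sigma> * (2 / (\<alpha> * real T) + 2 * sqrt \<alpha>))"
    by (rule expected_average_dualH_grad_le_adaptive_var2[OF _ f_grad f_bdd sel_meas sigma var])
  also have "\<dots> = ennreal ((f x0 - Inf (range f)) / (\<eta> * real T) + 2 * \<eta> / \<alpha> * lip_const Hs Df
      + 2 * \<sigma> / (\<alpha> * real T) + 2 * \<sigma> * sqrt \<alpha>)"
    by (simp add: algebra_simps)
  finally show ?thesis .
qed

end
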